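(* Let $(A,B,P)$ be a tetrablock contraction on $\mathcal H$ with fundamental operators $F_1,F_2\in\mathcal B(\mathcal D_P)$, let $\Xi\in\mathcal B(\mathcal D_P)$, and on $\mathcal K=\mathcal H\oplus\ell^2(\mathcal D_P)$ let $$V_1=\begin{pmatrix}A&0\\ C_1&T_{\varphi_1}\end{pmatrix},\quad V_2=\begin{pmatrix}B&0\\ C_2&T_{\varphi_2}\end{pmatrix},\quad V_3=\begin{pmatrix}P&0\\ C_3&T_{z^2}\end{pmatrix},$$ where $\varphi_1(z)=F_1+\Xi z+F_2^*z^2$, $\varphi_2(z)=F_2+\Xi^*z+F_1^*z^2$, and for $h\in\mathcal H$: $C_1h=(\Xi D_Ph,F_2^*D_Ph,0,0,\dots)$, $C_2h=(\Xi^*D_Ph,F_1^*D_Ph,0,0,\dots)$, $C_3h=(0,D_Ph,0,0,\dots)$. Then $V_1,V_2,V_3$ pairwise commute if and only if (i) $(\Xi F_1^*-\Xi^*F_2^* )D_PP=0$; (ii) $[F_2,F_2^*]-[F_1,F_1^*]=[\Xi,\Xi^*]$; (iii) $[F_1,F_2]=0$; (iv) $[\Xi,F_2]=[\Xi^*,F_1]$; (v) $\Xi D_PP=0$ and $\Xi^*D_PP=0$. Here $[X,Y]=XY-YX$.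
   Context: The closed tetrablock is $\overline{\mathbb E}=\{(a_{11},a_{22},\det M): M=(a_{ij})\in\mathbb M_2(\mathbb C),\ \|M\|\le1\}$. A tetrablock contraction is a commuting triple $(A,B,P)$ of bounded operators on a Hilbert space whose Taylor joint spectrum lies in $\overline{\mathbb E}$ and with $\|f(A,B,P)\|\le\sup_{\overline{\mathbb E}}|f|$ for every rational $f$ with poles off $\overline{\mathbb E}$. For a contraction $P$, $D_P=(I-P^*P)^{1/2}$ and $\mathcal D_P=\overline{\operatorname{Ran}}D_P$. For a tetrablock contraction $(A,B,P)$ there are unique $F_1,F_2\in\mathcal B(\mathcal D_P)$, the fundamental operators, with $A-B^*P=D_PF_1D_P$ and $B-A^*P=D_PF_2D_P$. For a Hilbert space $\mathcal E$, $\ell^2(\mathcal E)=\mathcal E\oplus\mathcal E\oplus\cdots$ is identified with the Hardy space $H^2_{\mathbb D}(\mathcal E)$ via $(e_n)\mapsto\sum e_nz^n$. For $\varphi\in L^\infty_{\mathbb T}(\mathcal B(\mathcal E))$ the Toeplitz operator $T_\varphi$ is the compression to $H^2_{\mathbb D}(\mathcal E)$ of multiplication by $\varphi$ on $L^2_{\mathbb T}(\mathcal E)$; for a polynomial $\varphi(z)=\sum_{n=0}^N\Phi_nz^n$ it acts by $(T_\varphi f)(z)=\varphi(z)f(z)$, with block matrix $(\Phi_{i-j})_{i,j\ge0}$ ($\Phi_k=0$ for $k<0$ or $k>N$). In particular $T_{z^2}(e_0,e_1,\dots)=(0,0,e_0,e_1,\dots)$. *)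

theory Defs
  imports "HOL-Analysis.Analysis"
begin

class chilbert = ab_group_add +
  fixes scaleC :: "complex \<Rightarrow> 'a \<Rightarrow> 'a"  (infixr "*\<^sub>C" 75)
  fixes cinner :: "'a \<Rightarrow> 'a \<Rightarrow> complex"
  assumes scaleC_add_right: "c *\<^sub>C (x + y) = c *\<^sub>C x + c *\<^sub>C y"
    and scaleC_add_left: "(c + d) *\<^sub>C x = c *\<^sub>C x + d *\<^sub>C x"
    and scaleC_scaleC: "c *\<^sub>C (d *\<^sub>C x) = (c * d) *\<^sub>C x"
    and scaleC_one: "1 *\<^sub>C x = x"
    and cinner_add_right: "cinner x (y + z) = cinner x y + cinner x z"
    and cinner_scaleC_right: "cinner x (c *\<^sub>C y) = c * cinner x y"
    and cinner_commute: "cinner y x = cnj (cinner x y)"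
    and cinner_nonneg: "0 \<le> Re (cinner x x)"
    and cinner_eq_zero: "cinner x x = 0 \<Longrightarrow> x = 0"
    and chilbert_complete:
      "(\<forall>e>0. \<exists>N::nat. \<forall>m\<ge>N. \<forall>n\<ge>N. sqrt (Re (cinner (X m - X n) (X m - X n))) < e)
        \<Longrightarrow> (\<exists>L. \<forall>e>0. \<exists>N::nat. \<forall>n\<ge>N. sqrt (Re (cinner (X n - L) (X n - L))) < e)"

definition cnorm :: "'a::chilbert \<Rightarrow> real" where
  "cnorm x = sqrt (Re (cinner x x))"

text \<open>Operators are functions on the Hilbert space; an operator in B(S), for a
  (closed) subspace S, is a map that sends S into S and is complex linear and bounded on S.
  Two operators in B(S) are equal iff they agree on S.\<close>

definition bop :: "'a::chilbert set \<Rightarrow> ('a \<Rightarrow> 'a) \<Rightarrow> bool" where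
  "bop S T \<longleftrightarrow> (\<forall>x\<in>S. T x \<in> S)
     \<and> (\<forall>x\<in>S. \<forall>y\<in>S. T (x + y) = T x + T y)
     \<and> (\<forall>c. \<forall>x\<in>S. T (c *\<^sub>C x) = c *\<^sub>C T x)
     \<and> (\<exists>K. \<forall>x\<in>S. cnorm (T x) \<le> K * cnorm x)"

definition adj :: "'a::chilbert set \<Rightarrow> ('a \<Rightarrow> 'a) \<Rightarrow> ('a \<Rightarrow> 'a)" where
  "adj S T = (SOME T'. bop S T' \<and> (\<forall>x\<in>S. \<forall>y\<in>S. cinner (T x) y = cinner x (T' y)))"

definition posop :: "('a::chilbert \<Rightarrow> 'a) \<Rightarrow> bool" where
  "posop T \<longleftrightarrow> bop UNIV T \<and> (\<forall>x y. cinner (T x) y = cinner x (T y))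
     \<and> (\<forall>x. 0 \<le> Re (cinner x (T x)))"

definition defect :: "('a::chilbert \<Rightarrow> 'a) \<Rightarrow> ('a \<Rightarrow> 'a)" where
  "defect P = (THE D. posop D \<and> (\<forall>x. D (D x) = x - adj UNIV P (P x)))"

definition defect_space :: "('a::chilbert \<Rightarrow> 'a) \<Rightarrow> 'a set" where
  "defect_space P = {x. \<forall>e>0. \<exists>y. cnorm (x - defect P y) < e}"

definition tetrablock_closed :: "(complex \<times> complex \<times> complex) set" where
  "tetrablock_closed = {(M $ 1 $ 1, M $ 2 $ 2, det M) | M :: complex^2^2.
                          \<forall>x. norm (M *v x) \<le> norm x}"

text \<open>Taylor joint spectrum of a commuting triple, via exactness of the Koszul complex
  0 -> H -> H^3 -> H^3 -> H -> 0 of (S1,S2,S3) = (T1 - l1, T2 - l2, T3 - l3).\<close>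

definition koszul_exact :: "('a::chilbert \<Rightarrow> 'a) \<Rightarrow> ('a \<Rightarrow> 'a) \<Rightarrow> ('a \<Rightarrow> 'a) \<Rightarrow> bool" where
  "koszul_exact S1 S2 S3 \<longleftrightarrow>
     (\<forall>x. S1 x = 0 \<and> S2 x = 0 \<and> S3 x = 0 \<longrightarrow> x = 0)
   \<and> (\<forall>x1 x2 x3. S2 x3 - S3 x2 = 0 \<and> S3 x1 - S1 x3 = 0 \<and> S1 x2 - S2 x1 = 0
        \<longrightarrow> (\<exists>x. x1 = S1 x \<and> x2 = S2 x \<and> x3 = S3 x))
   \<and> (\<forall>y1 y2 y3. S1 y1 + S2 y2 + S3 y3 = 0
        \<longrightarrow> (\<exists>x1 x2 x3. y1 = S2 x3 - S3 x2 \<and> y2 = S3 x1 - S1 x3 \<and> y3 = S1 x2 - S2 x1))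
   \<and> (\<forall>y. \<exists>y1 y2 y3. y = S1 y1 + S2 y2 + S3 y3)"

definition taylor_spectrum ::
  "('a::chilbert \<Rightarrow> 'a) \<Rightarrow> ('a \<Rightarrow> 'a) \<Rightarrow> ('a \<Rightarrow> 'a) \<Rightarrow> (complex \<times> complex \<times> complex) set" where
  "taylor_spectrum T1 T2 T3 = {(l1, l2, l3).
     \<not> koszul_exact (\<lambda>x. T1 x - l1 *\<^sub>C x) (\<lambda>x. T2 x - l2 *\<^sub>C x) (\<lambda>x. T3 x - l3 *\<^sub>C x)}"

definition poly3 :: "(nat \<times> nat \<times> nat) set \<Rightarrow> (nat \<times> nat \<times> nat \<Rightarrow> complex)
    \<Rightarrow> complex \<times> complex \<times> complex \<Rightarrow> complex" where
  "poly3 S c z = (\<Sum>(i,j,k)\<in>S. c (i,j,k) * fst z ^ i * fst (snd z) ^ j * snd (snd z) ^ k)"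

definition opoly3 :: "(nat \<times> nat \<times> nat) set \<Rightarrow> (nat \<times> nat \<times> nat \<Rightarrow> complex)
    \<Rightarrow> ('a::chilbert \<Rightarrow> 'a) \<Rightarrow> ('a \<Rightarrow> 'a) \<Rightarrow> ('a \<Rightarrow> 'a) \<Rightarrow> 'a \<Rightarrow> 'a" where
  "opoly3 S c T1 T2 T3 x = (\<Sum>(i,j,k)\<in>S. c (i,j,k) *\<^sub>C (T1 ^^ i) ((T2 ^^ j) ((T3 ^^ k) x)))"

text \<open>Tetrablock contraction: commuting bounded triple, Taylor spectrum in the closed
  tetrablock, and for every rational f = p/q with q zero-free on the closed tetrablock,
  ||f(A,B,P)|| = ||p(A,B,P) q(A,B,P)^(-1)|| <= sup over the closed tetrablock of |f|.\<close>

definition tetrablock_contraction :: "('a::chilbert \<Rightarrow> 'a) \<Rightarrow> ('a \<Rightarrow> 'a) \<Rightarrow> ('a \<Rightarrow> 'a) \<Rightarrow> bool" where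
  "tetrablock_contraction A B P \<longleftrightarrow>
     bop UNIV A \<and> bop UNIV B \<and> bop UNIV P
   \<and> (\<forall>x. A (B x) = B (A x)) \<and> (\<forall>x. A (P x) = P (A x)) \<and> (\<forall>x. B (P x) = P (B x))
   \<and> taylor_spectrum A B P \<subseteq> tetrablock_closed
   \<and> (\<forall>S p q X. finite S \<longrightarrow> (\<forall>z\<in>tetrablock_closed. poly3 S q z \<noteq> 0)
        \<longrightarrow> bop UNIV X \<longrightarrow> (\<forall>x. X (opoly3 S q A B P x) = x) \<longrightarrow> (\<forall>x. opoly3 S q A B P (X x) = x)
        \<longrightarrow> (\<forall>x. cnorm (opoly3 S p A B P (X x))
               \<le> (SUP z\<in>tetrablock_closed. cmod (poly3 S p z / poly3 S q z)) * cnorm x))"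

definition ell2 :: "'a::chilbert set \<Rightarrow> (nat \<Rightarrow> 'a) set" where
  "ell2 E = {f. (\<forall>n. f n \<in> E) \<and> summable (\<lambda>n. (cnorm (f n))\<^sup>2)}"

text \<open>Toeplitz operator with polynomial symbol phi(z) = sum_k Phis!k z^k, acting on
  sequences: block matrix (Phi_(i-j)).\<close>
definition toeplitz :: "('a::chilbert \<Rightarrow> 'a) list \<Rightarrow> (nat \<Rightarrow> 'a) \<Rightarrow> nat \<Rightarrow> 'a" where
  "toeplitz Phis f n = (\<Sum>k<length Phis. if k \<le> n then (Phis ! k) (f (n - k)) else 0)"

end

theory Submission
  imports Defs
begin

text \<open>Each of \<open>V\<^sub>1, V\<^sub>2, V\<^sub>3\<close> is a block operator \<open>[[T, 0], [C, T\<^sub>\<phi>]]\<close> on \<open>\<H> \<oplus> \<ell>\<^sup>2(\<D>\<^sub>P)\<close> with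
  quadratic symbol \<open>\<phi>(z) = a\<^sub>0 + a\<^sub>1 z + a\<^sub>2 z\<^sup>2\<close> and \<open>C h = (a\<^sub>1 D\<^sub>P h, a\<^sub>2 D\<^sub>P h, 0, \<dots>)\<close>, and in each
  case \<open>D\<^sub>P T = a\<^sub>0 D\<^sub>P + a\<^sub>2 D\<^sub>P P\<close>: trivially for \<open>T = P\<close>, and for \<open>T = A, B\<close> because the fundamental
  equations force \<open>D\<^sub>P A = F\<^sub>1 D\<^sub>P + F\<^sub>2\<^sup>* D\<^sub>P P\<close> and \<open>D\<^sub>P B = F\<^sub>2 D\<^sub>P + F\<^sub>1\<^sup>* D\<^sub>P P\<close>.
  For two such operators, testing on vectors \<open>(0, f)\<close> and \<open>(h, 0)\<close> separates commutation into
  two conditions: the Toeplitz parts commute iff the five coefficients of \<open>\<phi>\<^sub>a \<phi>\<^sub>b - \<phi>\<^sub>b \<phi>\<^sub>a\<close> vanish,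
  and then the lower left blocks agree iff \<open>a\<^sub>1 b\<^sub>2 D\<^sub>P P = b\<^sub>1 a\<^sub>2 D\<^sub>P P\<close>.
  For \<open>V\<^sub>1, V\<^sub>2\<close> the coefficients of \<open>1, z, z\<^sup>2\<close> give (iii), (iv), (ii), those of \<open>z\<^sup>3, z\<^sup>4\<close> are the
  adjoints of the first two, and the block condition is (i); the symbol \<open>z\<^sup>2\<close> of \<open>V\<^sub>3\<close> commutes
  with every symbol, so for the pairs involving \<open>V\<^sub>3\<close> only the block conditions (v) remain.\<close>

section \<open>Inner products and norms\<close>

context chilbert begin

lemma scaleC_zero_left[simp]: "0 *\<^sub>C x = 0"
proof -
  have "0 *\<^sub>C x = (0+0) *\<^sub>C x" by simp
  also have "\<dots> = 0 *\<^sub>C x + 0 *\<^sub>C x" by (rule scaleC_add_left)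
  finally show ?thesis by simp
qed

lemma scaleC_zero_right[simp]: "c *\<^sub>C 0 = 0"
proof -
  have "c *\<^sub>C 0 = c *\<^sub>C (0+0)" by simp
  also have "\<dots> = c *\<^sub>C 0 + c *\<^sub>C 0" by (rule scaleC_add_right)
  finally show ?thesis by simp
qed

lemma scaleC_minus_right: "c *\<^sub>C (- x) = - (c *\<^sub>C x)"
proof -
  have "c *\<^sub>C (- x) + c *\<^sub>C x = 0" by (simp flip: scaleC_add_right)
  thus ?thesis by (rule iffD2[OF eq_neg_iff_add_eq_0])
qed

lemma scaleC_minus_left: "(- c) *\<^sub>C x = - (c *\<^sub>C x)"
proof -
  have "(- c) *\<^sub>C x + c *\<^sub>C x = 0" by (simp flip: scaleC_add_left)
  thus ?thesis by (rule iffD2[OF eq_neg_iff_add_eq_0])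
qed

lemma scaleC_diff_right: "c *\<^sub>C (x - y) = c *\<^sub>C x - c *\<^sub>C y"
  using scaleC_add_right[of c x "-y"] scaleC_minus_right[of c y] by simp

lemma scaleC_sum_right: "c *\<^sub>C (\<Sum>i\<in>I. f i) = (\<Sum>i\<in>I. c *\<^sub>C f i)"
  by (induction I rule: infinite_finite_induct) (auto simp: scaleC_add_right)

lemma scaleC_sum_left: "(\<Sum>i\<in>I. f i) *\<^sub>C x = (\<Sum>i\<in>I. f i *\<^sub>C x)"
  by (induction I rule: infinite_finite_induct) (auto simp: scaleC_add_left)

end

lemma cinner_add_left: "cinner (x + y) z = cinner x z + cinner y z"
  by (metis cinner_add_right cinner_commute complex_cnj_add)

lemma cinner_scaleC_left: "cinner (c *\<^sub>C x) y = cnj c * cinner x y"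
  by (metis cinner_commute cinner_scaleC_right complex_cnj_mult)

lemma cinner_zero_right[simp]: "cinner x 0 = 0"
  by (metis cinner_scaleC_right mult_zero_left scaleC_zero_left)

lemma cinner_zero_left[simp]: "cinner 0 x = 0"
  by (metis cinner_commute cinner_zero_right complex_cnj_zero)

lemma cinner_minus_right: "cinner x (- y) = - cinner x y"
proof -
  have "cinner x (-y) + cinner x y = 0" using cinner_add_right[of x "-y" y] by simp
  then show ?thesis by (rule iffD2[OF eq_neg_iff_add_eq_0])
qed

lemma cinner_minus_left: "cinner (- x) y = - cinner x y"
proof -
  have "cinner (-x) y + cinner x y = 0" using cinner_add_left[of "-x" x y] by simp
  then show ?thesis by (rule iffD2[OF eq_neg_iff_add_eq_0])
qed

lemma cinner_diff_right: "cinner x (y - z) = cinner x y - cinner x z"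
  using cinner_add_right[of x y "-z"] cinner_minus_right[of x z] by simp

lemma cinner_diff_left: "cinner (x - y) z = cinner x z - cinner y z"
  using cinner_add_left[of x "-y" z] cinner_minus_left[of y z] by simp

lemma cinner_sum_right: "cinner x (\<Sum>i\<in>I. f i) = (\<Sum>i\<in>I. cinner x (f i))"
  by (induction I rule: infinite_finite_induct) (auto simp: cinner_add_right)

lemma cinner_sum_left: "cinner (\<Sum>i\<in>I. f i) x = (\<Sum>i\<in>I. cinner (f i) x)"
  by (induction I rule: infinite_finite_induct) (auto simp: cinner_add_left)

lemma cinner_self_Im: "Im (cinner x x) = 0"
proof -
  have "Im (cinner x x) = Im (cnj (cinner x x))" using cinner_commute[of x x] by simp
  thus ?thesis by simp
qed

lemma cinner_self_real: "cinner x x = complex_of_real (Re (cinner x x))"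
  using cinner_self_Im complex_eq_iff by force

lemma cnorm_nonneg: "0 \<le> cnorm x" using cinner_nonneg[of x] by (simp add: cnorm_def)

lemma cnorm_sq: "(cnorm x)\<^sup>2 = Re (cinner x x)"
  using cinner_nonneg[of x] by (simp add: cnorm_def)

lemma cinner_self_cnorm: "cinner x x = complex_of_real ((cnorm x)\<^sup>2)"
  by (metis cinner_self_real cnorm_sq)

lemma cnorm_zero[simp]: "cnorm 0 = 0" by (simp add: cnorm_def)

lemma cnorm_eq_0[simp]: "cnorm x = 0 \<longleftrightarrow> x = 0"
  by (metis cinner_eq_zero cinner_self_cnorm cnorm_zero of_real_0 power_zero_numeral)

lemma cnorm_scaleC: "cnorm (c *\<^sub>C x) = cmod c * cnorm x"
proof -
  have "cinner (c *\<^sub>C x) (c *\<^sub>C x) = (c * cnj c) * cinner x x"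
    by (simp add: cinner_scaleC_left cinner_scaleC_right)
  also have "\<dots> = complex_of_real ((cmod c)\<^sup>2 * (cnorm x)\<^sup>2)"
    using complex_norm_square[of c] by (simp add: cinner_self_cnorm)
  finally have "(cnorm (c *\<^sub>C x))\<^sup>2 = (cmod c * cnorm x)\<^sup>2"
    by (simp add: cnorm_sq power_mult_distrib)
  thus ?thesis by (rule power2_eq_imp_eq) (simp_all add: cnorm_nonneg)
qed

lemma cnorm_minus: "cnorm (- x) = cnorm x"
  using cnorm_scaleC[of "-1" x] by (simp add: scaleC_minus_left scaleC_one)

lemma cnorm_minus_commute: "cnorm (x - y) = cnorm (y - x)"
  by (metis cnorm_minus minus_diff_eq)

lemma cnorm_sq_minus_component:
  fixes x y :: "'a::chilbert"
  assumes "y \<noteq> 0"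
  defines "t \<equiv> cinner y x / cinner y y"
  shows "Re (cinner (x - t *\<^sub>C y) (x - t *\<^sub>C y)) = (cnorm x)\<^sup>2 - (cmod (cinner y x))\<^sup>2 / (cnorm y)\<^sup>2"
proof -
  define r where "r = (cnorm y)\<^sup>2"
  have r: "r > 0" using assms cnorm_nonneg[of y] unfolding r_def
    by (metis cnorm_eq_0 order_le_less zero_less_power)
  have yy: "cinner y y = complex_of_real r" by (simp add: r_def cinner_self_cnorm)
  define a where "a = cinner y x"
  have xy: "cinner x y = cnj a" by (simp add: a_def cinner_commute[of x y])
  have "cinner (x - t *\<^sub>C y) (x - t *\<^sub>C y) = cinner x x - t * cinner x y - cnj t * cinner y x + cnj t * t * cinner y y"
    by (simp add: cinner_diff_left cinner_diff_right cinner_scaleC_left cinner_scaleC_right algebra_simps)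
  also have "\<dots> = cinner x x - a * cnj a / r"
    using r by (simp add: t_def yy xy a_def[symmetric] field_simps)
  finally have e: "cinner (x - t *\<^sub>C y) (x - t *\<^sub>C y) = cinner x x - a * cnj a / complex_of_real r" .
  have "a * cnj a / complex_of_real r = complex_of_real ((cmod a)\<^sup>2 / r)"
    using complex_norm_square[of a] by simp
  with e have "Re (cinner (x - t *\<^sub>C y) (x - t *\<^sub>C y)) = Re (cinner x x) - (cmod a)\<^sup>2 / r"
    by simp
  thus ?thesis by (simp add: cnorm_sq r_def a_def)
qed

lemma cinner_cauchy_schwarz: "cmod (cinner x y) \<le> cnorm x * cnorm y"
proof (cases "y = 0")
  case True thus ?thesis by simp
next
  case False
  have "0 \<le> (cnorm x)\<^sup>2 - (cmod (cinner y x))\<^sup>2 / (cnorm y)\<^sup>2"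
    using cnorm_sq_minus_component[OF False, of x] cinner_nonneg by metis
  moreover have "cnorm y > 0" using False cnorm_nonneg[of y] by (simp add: order_le_less)
  ultimately have "(cmod (cinner y x))\<^sup>2 \<le> (cnorm x)\<^sup>2 * (cnorm y)\<^sup>2"
    using False pos_divide_le_eq[of "(cnorm y)\<^sup>2" "(cmod (cinner y x))\<^sup>2" "(cnorm x)\<^sup>2"] by simp
  hence "(cmod (cinner y x))\<^sup>2 \<le> (cnorm x * cnorm y)\<^sup>2" by (simp add: power_mult_distrib)
  hence "cmod (cinner y x) \<le> cnorm x * cnorm y"
    using cnorm_nonneg by (meson mult_nonneg_nonneg power2_le_imp_le)
  thus ?thesis by (metis cinner_commute complex_mod_cnj)
qed

lemma cnorm_add_sq: "(cnorm (x + y))\<^sup>2 = (cnorm x)\<^sup>2 + 2 * Re (cinner x y) + (cnorm y)\<^sup>2"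
proof -
  have "Re (cinner y x) = Re (cinner x y)" using cinner_commute[of y x] by simp
  thus ?thesis by (simp add: cnorm_sq cinner_add_left cinner_add_right)
qed

lemma cnorm_triangle: "cnorm (x + y) \<le> cnorm x + cnorm y"
proof -
  have "Re (cinner x y) \<le> cnorm x * cnorm y"
    using cinner_cauchy_schwarz[of x y] complex_Re_le_cmod order_trans by blast
  hence "(cnorm (x + y))\<^sup>2 \<le> (cnorm x + cnorm y)\<^sup>2"
    by (simp add: cnorm_add_sq power2_sum)
  thus ?thesis using cnorm_nonneg by (meson add_nonneg_nonneg power2_le_imp_le)
qed

lemma cnorm_diff_triangle: "cnorm (x - z) \<le> cnorm (x - y) + cnorm (y - z)"
  using cnorm_triangle[of "x - y" "y - z"] by simp

lemma cnorm_sum: "cnorm (\<Sum>i\<in>I. f i) \<le> (\<Sum>i\<in>I. cnorm (f i))"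
  by (induction I rule: infinite_finite_induct) (auto intro: order_trans[OF cnorm_triangle])

lemma parallelogram: "(cnorm (a + b))\<^sup>2 + (cnorm (a - b))\<^sup>2 = 2 * (cnorm a)\<^sup>2 + 2 * (cnorm b)\<^sup>2"
proof -
  have "(cnorm (a - b))\<^sup>2 = (cnorm a)\<^sup>2 + 2 * Re (cinner a (-b)) + (cnorm (-b))\<^sup>2"
    using cnorm_add_sq[of a "-b"] by simp
  thus ?thesis by (simp add: cnorm_add_sq cnorm_minus cinner_minus_right)
qed

lemma scaleC_two: "(2::complex) *\<^sub>C x = x + x"
  using scaleC_add_left[of 1 1 x] by (simp add: scaleC_one)

section \<open>Convergence\<close>

definition cconv :: "(nat \<Rightarrow> 'a::chilbert) \<Rightarrow> 'a \<Rightarrow> bool" where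
  "cconv X L \<longleftrightarrow> (\<lambda>n. cnorm (X n - L)) \<longlonglongrightarrow> 0"

lemma cconv_iff: "cconv X L \<longleftrightarrow> (\<forall>e>0. \<exists>N. \<forall>n\<ge>N. cnorm (X n - L) < e)"
  unfolding cconv_def LIMSEQ_iff by (simp add: abs_of_nonneg cnorm_nonneg)

lemma cconvD: "cconv X L \<Longrightarrow> e > 0 \<Longrightarrow> \<exists>N. \<forall>n\<ge>N. cnorm (X n - L) < e"
  using cconv_iff by blast

lemma cconv_Cauchy:
  fixes X :: "nat \<Rightarrow> 'a::chilbert"
  assumes "\<And>e. e > 0 \<Longrightarrow> \<exists>N. \<forall>m\<ge>N. \<forall>n\<ge>N. cnorm (X m - X n) < e"
  shows "\<exists>L. cconv X L"
proof -
  have "\<exists>L. \<forall>e>0. \<exists>N. \<forall>n\<ge>N. sqrt (Re (cinner (X n - L) (X n - L))) < e"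
    by (rule chilbert_complete) (use assms in \<open>auto simp: cnorm_def\<close>)
  thus ?thesis by (auto simp: cconv_iff cnorm_def)
qed

lemma cconv_unique: assumes "cconv X L" "cconv X M" shows "L = M"
proof (rule ccontr)
  assume "L \<noteq> M"
  hence e: "cnorm (L - M) / 2 > 0" using cnorm_nonneg[of "L - M"] by (simp add: order_le_less)
  obtain N1 where N1: "\<forall>n\<ge>N1. cnorm (X n - L) < cnorm (L - M) / 2" using cconvD[OF assms(1) e] by blast
  obtain N2 where N2: "\<forall>n\<ge>N2. cnorm (X n - M) < cnorm (L - M) / 2" using cconvD[OF assms(2) e] by blast
  let ?n = "max N1 N2"
  have "cnorm (L - M) \<le> cnorm (L - X ?n) + cnorm (X ?n - M)" by (rule cnorm_diff_triangle)
  also have "\<dots> < cnorm (L - M)"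
  proof -
    have a: "cnorm (X ?n - L) < cnorm (L - M) / 2" using N1 by simp
    have b: "cnorm (X ?n - M) < cnorm (L - M) / 2" using N2 by simp
    show ?thesis using a b cnorm_minus_commute[of L "X ?n"] by linarith
  qed
  finally show False by simp
qed

lemma cconv_const: "cconv (\<lambda>n. x) x" by (simp add: cconv_def)

lemma tendsto_null_bound:
  fixes f :: "nat \<Rightarrow> 'b::real_normed_vector"
  assumes "\<And>n. norm (f n) \<le> g n" "g \<longlonglongrightarrow> 0" shows "f \<longlonglongrightarrow> 0"
  by (rule Lim_null_comparison[OF always_eventually assms(2)]) (use assms(1) in blast)

lemma cconv_dominated: assumes "cconv X L" "\<And>n. cnorm (Y n - M) \<le> c * cnorm (X n - L)"
  shows "cconv Y M"
proof -
  have "(\<lambda>n. c * cnorm (X n - L)) \<longlonglongrightarrow> c * 0"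
    using assms(1) unfolding cconv_def by (intro tendsto_mult tendsto_const)
  hence g: "(\<lambda>n. c * cnorm (X n - L)) \<longlonglongrightarrow> 0" by simp
  have b: "norm (cnorm (Y n - M)) \<le> c * cnorm (X n - L)" for n
    using assms(2)[of n] by (simp add: abs_of_nonneg cnorm_nonneg)
  have "(\<lambda>n. cnorm (Y n - M)) \<longlonglongrightarrow> 0" by (rule tendsto_null_bound[OF b g])
  thus ?thesis by (simp add: cconv_def)
qed

lemma cconv_dominated2:
  assumes "cconv X1 L1" "cconv X2 L2" "\<And>n. cnorm (Y n - M) \<le> a * cnorm (X1 n - L1) + cnorm (X2 n - L2)"
  shows "cconv Y M"
proof -
  have "(\<lambda>n. a * cnorm (X1 n - L1) + cnorm (X2 n - L2)) \<longlonglongrightarrow> a * 0 + 0"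
    using assms(1,2) unfolding cconv_def by (intro tendsto_add tendsto_mult tendsto_const)
  hence g: "(\<lambda>n. a * cnorm (X1 n - L1) + cnorm (X2 n - L2)) \<longlonglongrightarrow> 0" by simp
  have b: "norm (cnorm (Y n - M)) \<le> a * cnorm (X1 n - L1) + cnorm (X2 n - L2)" for n
    using assms(3)[of n] by (simp add: abs_of_nonneg cnorm_nonneg)
  have "(\<lambda>n. cnorm (Y n - M)) \<longlonglongrightarrow> 0" by (rule tendsto_null_bound[OF b g])
  thus ?thesis by (simp add: cconv_def)
qed

lemma cconv_eventually_dominated:
  assumes "\<And>n. n \<ge> Nst \<Longrightarrow> cnorm (Y n - M) \<le> g n" "g \<longlonglongrightarrow> 0"
  shows "cconv Y M"
proof -
  have "(\<lambda>n. cnorm (Y n - M)) \<longlonglongrightarrow> 0"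
  proof (rule Lim_null_comparison[OF _ assms(2)])
    show "\<forall>\<^sub>F n in sequentially. norm (cnorm (Y n - M)) \<le> g n"
      unfolding eventually_sequentially using assms(1) by (auto simp: abs_of_nonneg cnorm_nonneg)
  qed
  thus ?thesis by (simp add: cconv_def)
qed

lemma cconv_add: assumes "cconv X L" "cconv Y M" shows "cconv (\<lambda>n. X n + Y n) (L + M)"
proof -
  have "(\<lambda>n. cnorm (X n - L) + cnorm (Y n - M)) \<longlonglongrightarrow> 0 + 0"
    using assms unfolding cconv_def by (intro tendsto_add)
  hence g: "(\<lambda>n. cnorm (X n - L) + cnorm (Y n - M)) \<longlonglongrightarrow> 0" by simp
  have b: "norm (cnorm (X n + Y n - (L + M))) \<le> cnorm (X n - L) + cnorm (Y n - M)" for n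
    using cnorm_triangle[of "X n - L" "Y n - M"] by (simp add: algebra_simps abs_of_nonneg cnorm_nonneg)
  have "(\<lambda>n. cnorm (X n + Y n - (L + M))) \<longlonglongrightarrow> 0" by (rule tendsto_null_bound[OF b g])
  thus ?thesis by (simp add: cconv_def)
qed

lemma cconv_scaleC: assumes "cconv X L" shows "cconv (\<lambda>n. c *\<^sub>C X n) (c *\<^sub>C L)"
  by (rule cconv_dominated[OF assms, of _ _ "cmod c"]) (simp add: scaleC_diff_right[symmetric] cnorm_scaleC)

lemma cconv_minus: assumes "cconv X L" shows "cconv (\<lambda>n. - X n) (- L)"
proof (rule cconv_dominated[OF assms, of _ _ 1])
  fix n
  have "- X n - - L = - (X n - L)" by simp
  thus "cnorm (- X n - - L) \<le> 1 * cnorm (X n - L)" using cnorm_minus_commute[of L "X n"] by simp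
qed

lemma cconv_diff: assumes "cconv X L" "cconv Y M" shows "cconv (\<lambda>n. X n - Y n) (L - M)"
  using cconv_add[OF assms(1) cconv_minus[OF assms(2)]] by simp

lemma cconv_inner: assumes "cconv X L" shows "(\<lambda>n. cinner y (X n)) \<longlonglongrightarrow> cinner y L"
proof -
  have "(\<lambda>n. cnorm y * cnorm (X n - L)) \<longlonglongrightarrow> cnorm y * 0"
    using assms unfolding cconv_def by (intro tendsto_mult tendsto_const)
  hence g: "(\<lambda>n. cnorm y * cnorm (X n - L)) \<longlonglongrightarrow> 0" by simp
  have b: "norm (cinner y (X n) - cinner y L) \<le> cnorm y * cnorm (X n - L)" for n
    using cinner_cauchy_schwarz[of y "X n - L"] by (simp add: cinner_diff_right)
  have "(\<lambda>n. cinner y (X n) - cinner y L) \<longlonglongrightarrow> 0" by (rule tendsto_null_bound[OF b g])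
  thus ?thesis by (rule LIM_zero_cancel)
qed

lemma cconv_inner_left: assumes "cconv X L" shows "(\<lambda>n. cinner (X n) y) \<longlonglongrightarrow> cinner L y"
proof -
  have "(\<lambda>n. cnj (cinner y (X n))) \<longlonglongrightarrow> cnj (cinner y L)"
    using cconv_inner[OF assms] by (rule tendsto_cnj)
  moreover have "(\<lambda>n. cnj (cinner y (X n))) = (\<lambda>n. cinner (X n) y)"
    by (rule ext, rule cinner_commute[symmetric])
  moreover have "cnj (cinner y L) = cinner L y" by (rule cinner_commute[symmetric])
  ultimately show ?thesis by simp
qed

lemma cconv_norm: assumes "cconv X L" shows "(\<lambda>n. cnorm (X n)) \<longlonglongrightarrow> cnorm L"
proof -
  have b: "norm (cnorm (X n) - cnorm L) \<le> cnorm (X n - L)" for n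
    using cnorm_diff_triangle[of "X n" 0 L] cnorm_diff_triangle[of L 0 "X n"] cnorm_minus_commute[of L "X n"]
    by auto
  have g: "(\<lambda>n. cnorm (X n - L)) \<longlonglongrightarrow> 0" using assms unfolding cconv_def .
  have "(\<lambda>n. cnorm (X n) - cnorm L) \<longlonglongrightarrow> 0" by (rule tendsto_null_bound[OF b g])
  thus ?thesis by (rule LIM_zero_cancel)
qed

section \<open>Subspaces and bounded operators\<close>

definition csubspace :: "'a::chilbert set \<Rightarrow> bool" where
  "csubspace M \<longleftrightarrow> 0 \<in> M \<and> (\<forall>x\<in>M. \<forall>y\<in>M. x + y \<in> M) \<and> (\<forall>c. \<forall>x\<in>M. c *\<^sub>C x \<in> M)"

definition cclosed :: "'a::chilbert set \<Rightarrow> bool" where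
  "cclosed M \<longleftrightarrow> (\<forall>X L. (\<forall>n. X n \<in> M) \<longrightarrow> cconv X L \<longrightarrow> L \<in> M)"

lemma csubspace_UNIV: "csubspace UNIV" by (simp add: csubspace_def)
lemma cclosed_UNIV: "cclosed UNIV" by (simp add: cclosed_def)

lemma csubspace_zero: "csubspace M \<Longrightarrow> 0 \<in> M" by (simp add: csubspace_def)
lemma csubspace_add: "csubspace M \<Longrightarrow> x \<in> M \<Longrightarrow> y \<in> M \<Longrightarrow> x + y \<in> M" by (simp add: csubspace_def)
lemma csubspace_scaleC: "csubspace M \<Longrightarrow> x \<in> M \<Longrightarrow> c *\<^sub>C x \<in> M" by (simp add: csubspace_def)
lemma csubspace_minus: "csubspace M \<Longrightarrow> x \<in> M \<Longrightarrow> - x \<in> M"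
  using csubspace_scaleC[of M x "-1"] by (simp add: scaleC_minus_left scaleC_one)
lemma csubspace_diff: "csubspace M \<Longrightarrow> x \<in> M \<Longrightarrow> y \<in> M \<Longrightarrow> x - y \<in> M"
  using csubspace_add[of M x "- y"] csubspace_minus[of M y] by simp

lemma bopD_in: "bop M T \<Longrightarrow> x \<in> M \<Longrightarrow> T x \<in> M" by (simp add: bop_def)
lemma bopD_add: "bop M T \<Longrightarrow> x \<in> M \<Longrightarrow> y \<in> M \<Longrightarrow> T (x + y) = T x + T y" by (simp add: bop_def)
lemma bopD_scale: "bop M T \<Longrightarrow> x \<in> M \<Longrightarrow> T (c *\<^sub>C x) = c *\<^sub>C T x" by (simp add: bop_def)
lemma bopD_bound: "bop M T \<Longrightarrow> \<exists>K\<ge>0. \<forall>x\<in>M. cnorm (T x) \<le> K * cnorm x"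
proof -
  assume "bop M T"
  then obtain K where K: "\<forall>x\<in>M. cnorm (T x) \<le> K * cnorm x" by (auto simp: bop_def)
  have "\<forall>x\<in>M. cnorm (T x) \<le> \<bar>K\<bar> * cnorm x"
    using K cnorm_nonneg by (meson abs_ge_self mult_right_mono order_trans)
  thus ?thesis by (intro exI[of _ "\<bar>K\<bar>"]) auto
qed
lemma bop_zero: "bop M T \<Longrightarrow> csubspace M \<Longrightarrow> T 0 = 0"
  using bopD_scale[of M T 0 0] csubspace_zero[of M] by simp
lemma bop_minus: "bop M T \<Longrightarrow> csubspace M \<Longrightarrow> x \<in> M \<Longrightarrow> T (- x) = - T x"
  using bopD_scale[of M T x "-1"] by (simp add: scaleC_minus_left scaleC_one)
lemma bop_diff: "bop M T \<Longrightarrow> csubspace M \<Longrightarrow> x \<in> M \<Longrightarrow> y \<in> M \<Longrightarrow> T (x - y) = T x - T y"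
  using bopD_add[of M T x "- y"] bop_minus[of M T y] csubspace_minus[of M y] by simp

lemma bop_id: "bop M id"
  unfolding bop_def by (auto intro!: exI[of _ 1])

lemma bop_zero_op: "csubspace M \<Longrightarrow> bop M (\<lambda>_. 0)"
  unfolding bop_def by (auto simp: csubspace_zero intro!: exI[of _ 0])

lemma bop_sum: "bop UNIV T \<Longrightarrow> T (\<Sum>i\<in>A. f i) = (\<Sum>i\<in>A. T (f i))"
  by (induction A rule: infinite_finite_induct)
     (auto simp: bop_zero[OF _ csubspace_UNIV] bopD_add)

lemma bop_cconv:
  assumes "bop M T" "csubspace M" "\<And>n. X n \<in> M" "L \<in> M" "cconv X L"
  shows "cconv (\<lambda>n. T (X n)) (T L)"
proof -
  obtain K where K: "K \<ge> 0" "\<forall>x\<in>M. cnorm (T x) \<le> K * cnorm x" using bopD_bound[OF assms(1)] by blast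
  show ?thesis
  proof (rule cconv_dominated[OF assms(5), of _ _ K])
    fix n
    have "T (X n) - T L = T (X n - L)" using bop_diff assms by metis
    thus "cnorm (T (X n) - T L) \<le> K * cnorm (X n - L)" using K csubspace_diff[OF assms(2) assms(3) assms(4)] by simp
  qed
qed

lemma csubspace_cinner_ext:
  assumes "csubspace M" "z1 \<in> M" "z2 \<in> M" "\<And>x. x \<in> M \<Longrightarrow> cinner x z1 = cinner x z2"
  shows "z1 = z2"
proof -
  have "cinner (z1 - z2) (z1 - z2) = 0"
    using assms(4)[OF csubspace_diff[OF assms(1-3)]] by (simp add: cinner_diff_right)
  thus ?thesis using cinner_eq_zero by fastforce
qed

section \<open>Orthogonal projection, Riesz representation, adjoints\<close>

lemma parallelogram_dist_bound:
  assumes N: "csubspace N" and p: "p \<in> N" and q: "q \<in> N"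
    and lower: "\<And>r. r \<in> N \<Longrightarrow> d \<le> cnorm (u - r)" and d: "0 \<le> d"
  shows "(cnorm (p - q))\<^sup>2 \<le> 2 * (cnorm (u - p))\<^sup>2 + 2 * (cnorm (u - q))\<^sup>2 - 4 * d\<^sup>2"
proof -
  define mid where "mid = (1/2::complex) *\<^sub>C (p + q)"
  have "mid \<in> N" unfolding mid_def using N p q by (intro csubspace_scaleC csubspace_add)
  have "(2::complex) *\<^sub>C mid = p + q" by (simp add: mid_def scaleC_scaleC scaleC_one)
  hence "(2::complex) *\<^sub>C (u - mid) = (u - p) + (u - q)"
    by (simp add: scaleC_diff_right scaleC_two algebra_simps)
  hence "cnorm ((u - p) + (u - q)) = 2 * cnorm (u - mid)" by (metis cnorm_scaleC norm_numeral)
  hence "2 * d \<le> cnorm ((u - p) + (u - q))" using lower[OF \<open>mid \<in> N\<close>] by simp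
  hence "4 * d\<^sup>2 \<le> (cnorm ((u - p) + (u - q)))\<^sup>2"
    using d power_mono[of "2 * d" _ 2] by (simp add: power_mult_distrib)
  moreover have "cnorm (p - q) = cnorm ((u - p) - (u - q))" by (simp add: cnorm_minus_commute)
  ultimately show ?thesis using parallelogram[of "u - p" "u - q"] by simp
qed

lemma minimizing_sequence_convergent:
  assumes N: "csubspace N" and q: "\<And>n. q n \<in> N"
    and lower: "\<And>r. r \<in> N \<Longrightarrow> d \<le> cnorm (u - r)" and d: "0 \<le> d"
    and lim: "(\<lambda>n. cnorm (u - q n)) \<longlonglongrightarrow> d"
  shows "\<exists>p. cconv q p"
proof (rule cconv_Cauchy)
  fix e :: real assume e: "e > 0"
  have "(\<lambda>n. (cnorm (u - q n))\<^sup>2 - d\<^sup>2) \<longlonglongrightarrow> d\<^sup>2 - d\<^sup>2" using lim by (intro tendsto_intros)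
  hence "(\<lambda>n. (cnorm (u - q n))\<^sup>2 - d\<^sup>2) \<longlonglongrightarrow> 0" by simp
  from LIMSEQ_D[OF this, of "e\<^sup>2 / 4"] e
  obtain M where M: "\<forall>n\<ge>M. \<bar>(cnorm (u - q n))\<^sup>2 - d\<^sup>2\<bar> < e\<^sup>2 / 4" by auto
  have "(cnorm (q m - q n))\<^sup>2 < e\<^sup>2" if "m \<ge> M" "n \<ge> M" for m n
  proof -
    have "(cnorm (q m - q n))\<^sup>2 \<le> 2 * (cnorm (u - q m))\<^sup>2 + 2 * (cnorm (u - q n))\<^sup>2 - 4 * d\<^sup>2"
      by (rule parallelogram_dist_bound[OF N q q]) (use lower d in auto)
    moreover have "\<bar>(cnorm (u - q m))\<^sup>2 - d\<^sup>2\<bar> < e\<^sup>2 / 4" "\<bar>(cnorm (u - q n))\<^sup>2 - d\<^sup>2\<bar> < e\<^sup>2 / 4"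
      using M that by auto
    ultimately show ?thesis by linarith
  qed
  hence "cnorm (q m - q n) < e" if "m \<ge> M" "n \<ge> M" for m n
    using that e by (meson less_imp_le power2_less_imp_less)
  thus "\<exists>M. \<forall>m\<ge>M. \<forall>n\<ge>M. cnorm (q m - q n) < e" by blast
qed

lemma best_approximation_exists:
  assumes N: "csubspace N" "cclosed N"
  shows "\<exists>p\<in>N. \<forall>q\<in>N. cnorm (u - p) \<le> cnorm (u - q)"
proof -
  define d where "d = (INF q\<in>N. cnorm (u - q))"
  have bdd: "bdd_below ((\<lambda>q. cnorm (u - q)) ` N)" by (rule bdd_belowI[of _ 0]) (auto simp: cnorm_nonneg)
  have lower: "d \<le> cnorm (u - q)" if "q \<in> N" for q
    unfolding d_def by (rule cINF_lower[OF bdd that])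
  have d0: "0 \<le> d" unfolding d_def using csubspace_zero[OF N(1)] by (intro cINF_greatest) (auto simp: cnorm_nonneg)
  have "\<exists>q\<in>N. cnorm (u - q) < d + 1 / real (Suc n)" for n
  proof -
    have "Inf ((\<lambda>q. cnorm (u - q)) ` N) < d + 1 / real (Suc n)" by (simp add: d_def)
    from cInf_lessD[OF _ this] show ?thesis using csubspace_zero[OF N(1)] by blast
  qed
  then obtain q where q: "\<And>n. q n \<in> N" "\<And>n. cnorm (u - q n) < d + 1 / real (Suc n)" by metis
  have lim: "(\<lambda>n. cnorm (u - q n)) \<longlonglongrightarrow> d"
  proof (rule real_tendsto_sandwich)
    show "\<forall>\<^sub>F n in sequentially. d \<le> cnorm (u - q n)" using lower q(1) by (intro always_eventually) blast
    show "\<forall>\<^sub>F n in sequentially. cnorm (u - q n) \<le> d + 1 / real (Suc n)"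
      using q(2) by (intro always_eventually allI less_imp_le)
    show "(\<lambda>n. d + 1 / real (Suc n)) \<longlonglongrightarrow> d"
      using tendsto_add[OF tendsto_const LIMSEQ_Suc[OF lim_inverse_n']] by simp
  qed simp
  have "\<exists>p. cconv q p" by (rule minimizing_sequence_convergent[OF N(1) q(1) _ d0 lim]) (rule lower)
  then obtain p where p: "cconv q p" ..
  have "p \<in> N" using N(2) p q(1) unfolding cclosed_def by blast
  have "(\<lambda>n. cnorm (u - q n)) \<longlonglongrightarrow> cnorm (u - p)"
    by (rule cconv_norm[OF cconv_diff[OF cconv_const p]])
  hence "cnorm (u - p) = d" using LIMSEQ_unique lim by blast
  thus ?thesis using \<open>p \<in> N\<close> lower by auto
qed

lemma best_approximation_orthogonal:
  assumes N: "csubspace N" and p: "p \<in> N" and y: "y \<in> N"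
    and best: "\<And>q. q \<in> N \<Longrightarrow> cnorm (u - p) \<le> cnorm (u - q)"
  shows "cinner y (u - p) = 0"
proof (cases "y = 0")
  case False
  define w where "w = u - p"
  define t where "t = cinner y w / cinner y y"
  have "p + t *\<^sub>C y \<in> N" using p y N by (intro csubspace_add csubspace_scaleC)
  hence "cnorm w \<le> cnorm (w - t *\<^sub>C y)" using best by (force simp: w_def algebra_simps)
  hence "(cnorm w)\<^sup>2 \<le> (cnorm (w - t *\<^sub>C y))\<^sup>2" by (rule power_mono) (simp add: cnorm_nonneg)
  also have "\<dots> = (cnorm w)\<^sup>2 - (cmod (cinner y w))\<^sup>2 / (cnorm y)\<^sup>2"
    using cnorm_sq_minus_component[OF False, of w] by (simp add: cnorm_sq t_def)
  finally have "(cmod (cinner y w))\<^sup>2 / (cnorm y)\<^sup>2 \<le> 0" by simp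
  moreover have "(cnorm y)\<^sup>2 > 0" using False cnorm_nonneg[of y] by (simp add: order_le_less)
  ultimately have "(cmod (cinner y w))\<^sup>2 \<le> 0" by (simp add: divide_le_0_iff)
  thus ?thesis by (simp add: w_def)
qed simp

lemma orthogonal_projection_exists:
  assumes "csubspace N" "cclosed N"
  shows "\<exists>p\<in>N. \<forall>q\<in>N. cinner q (u - p) = 0"
  using best_approximation_exists[OF assms] best_approximation_orthogonal[OF assms(1)] by metis

lemma cclosed_kernel:
  fixes \<psi> :: "'a::chilbert \<Rightarrow> complex"
  assumes M: "csubspace M" "cclosed M"
    and lin: "\<And>x y. x \<in> M \<Longrightarrow> y \<in> M \<Longrightarrow> \<psi> (x + y) = \<psi> x + \<psi> y"
             "\<And>c x. x \<in> M \<Longrightarrow> \<psi> (c *\<^sub>C x) = c * \<psi> x"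
    and bnd: "\<And>x. x \<in> M \<Longrightarrow> cmod (\<psi> x) \<le> K * cnorm x"
  shows "cclosed {x\<in>M. \<psi> x = 0}"
  unfolding cclosed_def
proof (intro allI impI)
  fix X L assume X: "\<forall>n. X n \<in> {x\<in>M. \<psi> x = 0}" and c: "cconv X L"
  have "L \<in> M" using X c M(2) unfolding cclosed_def by blast
  have "cmod (\<psi> L) \<le> K * cnorm (X n - L)" for n
  proof -
    have "X n \<in> M" using X by simp
    hence "\<psi> (X n - L) + \<psi> L = \<psi> (X n)"
      using lin(1)[OF csubspace_diff[OF M(1) _ \<open>L \<in> M\<close>] \<open>L \<in> M\<close>] by simp
    hence "\<psi> L = - \<psi> (X n - L)" using X by (simp add: eq_neg_iff_add_eq_0 add.commute)
    thus ?thesis using bnd[OF csubspace_diff[OF M(1)]] X \<open>L \<in> M\<close> by simp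
  qed
  moreover have "(\<lambda>n. K * cnorm (X n - L)) \<longlonglongrightarrow> K * 0"
    using c unfolding cconv_def by (intro tendsto_mult tendsto_const)
  ultimately have "cmod (\<psi> L) \<le> K * 0" by (intro LIMSEQ_le_const) auto
  thus "L \<in> {x\<in>M. \<psi> x = 0}" using \<open>L \<in> M\<close> by simp
qed

lemma riesz_representation:
  fixes \<psi> :: "'a::chilbert \<Rightarrow> complex"
  assumes M: "csubspace M" "cclosed M"
    and lin: "\<And>x y. x \<in> M \<Longrightarrow> y \<in> M \<Longrightarrow> \<psi> (x + y) = \<psi> x + \<psi> y"
             "\<And>c x. x \<in> M \<Longrightarrow> \<psi> (c *\<^sub>C x) = c * \<psi> x"
    and bnd: "\<And>x. x \<in> M \<Longrightarrow> cmod (\<psi> x) \<le> K * cnorm x"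
  shows "\<exists>z\<in>M. \<forall>x\<in>M. \<psi> x = cinner z x"
proof (cases "\<forall>x\<in>M. \<psi> x = 0")
  case True thus ?thesis using csubspace_zero[OF M(1)] by (intro bexI[of _ 0]) auto
next
  case False
  then obtain u where u: "u \<in> M" "\<psi> u \<noteq> 0" by blast
  have \<psi>_diff: "\<psi> (x - y) = \<psi> x - \<psi> y" if "x \<in> M" "y \<in> M" for x y
    using lin(1)[OF csubspace_diff[OF M(1) that] that(2)] by (simp add: eq_diff_eq)
  define N where "N = {x\<in>M. \<psi> x = 0}"
  have "csubspace N" unfolding N_def csubspace_def
    using M(1) lin lin(2)[of 0 0] by (auto simp: csubspace_zero csubspace_add csubspace_scaleC)
  moreover have "cclosed N" unfolding N_def by (rule cclosed_kernel[OF M lin bnd])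
  ultimately obtain p where p: "p \<in> N" "\<And>q. q \<in> N \<Longrightarrow> cinner q (u - p) = 0"
    using orthogonal_projection_exists by blast
  define w where "w = u - p"
  have "p \<in> M" "\<psi> p = 0" using p(1) by (auto simp: N_def)
  have "w \<in> M" using csubspace_diff[OF M(1) u(1) \<open>p \<in> M\<close>] by (simp add: w_def)
  have "\<psi> w \<noteq> 0" using \<psi>_diff[OF u(1) \<open>p \<in> M\<close>] \<open>\<psi> p = 0\<close> u(2) by (simp add: w_def)
  hence ww: "cinner w w \<noteq> 0" using cinner_eq_zero lin(2)[OF \<open>w \<in> M\<close>, of 0] by force
  have wwr: "cnj (cinner w w) = cinner w w" by (metis cinner_commute)
  define z where "z = (cnj (\<psi> w) / cinner w w) *\<^sub>C w"
  have "\<psi> x = cinner z x" if x: "x \<in> M" for x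
  proof -
    define v where "v = x - (\<psi> x / \<psi> w) *\<^sub>C w"
    have "v \<in> M" unfolding v_def using x \<open>w \<in> M\<close> M(1) by (intro csubspace_diff csubspace_scaleC)
    moreover have "\<psi> v = 0"
      unfolding v_def using \<psi>_diff[OF x csubspace_scaleC[OF M(1) \<open>w \<in> M\<close>]] lin(2)[OF \<open>w \<in> M\<close>] \<open>\<psi> w \<noteq> 0\<close>
      by simp
    ultimately have "cinner v w = 0" using p(2) by (simp add: N_def w_def)
    hence "cinner x w = cnj (\<psi> x / \<psi> w) * cinner w w"
      by (simp add: v_def cinner_diff_left cinner_scaleC_left)
    hence "cinner w x = (\<psi> x / \<psi> w) * cinner w w"
      by (metis cinner_commute complex_cnj_cnj complex_cnj_mult wwr)
    thus ?thesis using ww \<open>\<psi> w \<noteq> 0\<close> by (simp add: z_def cinner_scaleC_left wwr)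
  qed
  moreover have "z \<in> M" using \<open>w \<in> M\<close> M(1) by (simp add: z_def csubspace_scaleC)
  ultimately show ?thesis by blast
qed

lemma bop_adjoint_relation:
  assumes M: "csubspace M" and F: "bop M F"
    and G: "\<And>y. y \<in> M \<Longrightarrow> G y \<in> M"
    and FG: "\<And>x y. x \<in> M \<Longrightarrow> y \<in> M \<Longrightarrow> cinner (F x) y = cinner x (G y)"
  shows "bop M G"
proof -
  obtain K where K: "K \<ge> 0" "\<And>x. x \<in> M \<Longrightarrow> cnorm (F x) \<le> K * cnorm x" using bopD_bound[OF F] by blast
  have "G (y + y') = G y + G y'" if "y \<in> M" "y' \<in> M" for y y'
    using that M G csubspace_add[OF M]
    by (intro csubspace_cinner_ext[OF M]) (simp_all add: FG[symmetric] cinner_add_right)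
  moreover have "G (c *\<^sub>C y) = c *\<^sub>C G y" if "y \<in> M" for c y
    using that M G csubspace_scaleC[OF M]
    by (intro csubspace_cinner_ext[OF M]) (simp_all add: FG[symmetric] cinner_scaleC_right)
  moreover have "cnorm (G y) \<le> K * cnorm y" if y: "y \<in> M" for y
  proof -
    have "(cnorm (G y))\<^sup>2 = Re (cinner (F (G y)) y)" using FG[OF G[OF y] y] by (simp add: cnorm_sq)
    also have "\<dots> \<le> cnorm (F (G y)) * cnorm y"
      using cinner_cauchy_schwarz[of "F (G y)" y] complex_Re_le_cmod order_trans by blast
    also have "\<dots> \<le> K * cnorm (G y) * cnorm y"
      by (rule mult_right_mono[OF K(2)[OF G[OF y]] cnorm_nonneg])
    finally have "cnorm (G y) * cnorm (G y) \<le> (K * cnorm y) * cnorm (G y)"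
      by (simp add: power2_eq_square algebra_simps)
    moreover have "0 \<le> K * cnorm y" using K(1) by (simp add: cnorm_nonneg)
    ultimately show ?thesis using cnorm_nonneg[of "G y"]
      by (metis mult_right_le_imp_le order_le_less order_trans)
  qed
  ultimately show ?thesis using G unfolding bop_def by blast
qed

lemma adjoint_exists:
  assumes M: "csubspace M" "cclosed M" and F: "bop M F"
  shows "\<exists>G. bop M G \<and> (\<forall>x\<in>M. \<forall>y\<in>M. cinner (F x) y = cinner x (G y))"
proof -
  obtain K where K: "K \<ge> 0" "\<And>x. x \<in> M \<Longrightarrow> cnorm (F x) \<le> K * cnorm x" using bopD_bound[OF F] by blast
  have "\<exists>z\<in>M. \<forall>x\<in>M. cinner y (F x) = cinner z x" if y: "y \<in> M" for y
  proof (rule riesz_representation[OF M, where K = "cnorm y * K"])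
    show "cinner y (F (x + x')) = cinner y (F x) + cinner y (F x')" if "x \<in> M" "x' \<in> M" for x x'
      using bopD_add[OF F that] by (simp add: cinner_add_right)
    show "cinner y (F (c *\<^sub>C x)) = c * cinner y (F x)" if "x \<in> M" for c x
      using bopD_scale[OF F that] by (simp add: cinner_scaleC_right)
    show "cmod (cinner y (F x)) \<le> cnorm y * K * cnorm x" if "x \<in> M" for x
      using cinner_cauchy_schwarz[of y "F x"] K(2)[OF that] cnorm_nonneg[of y]
      by (smt (verit, best) mult.assoc mult_left_mono)
  qed
  hence "\<exists>z\<in>M. \<forall>x\<in>M. cinner (F x) y = cinner x z" if "y \<in> M" for y
    using that by (metis cinner_commute)
  then obtain G where G: "\<And>y. y \<in> M \<Longrightarrow> G y \<in> M \<and> (\<forall>x\<in>M. cinner (F x) y = cinner x (G y))"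
    by metis
  have "bop M G" by (rule bop_adjoint_relation[OF M(1) F]) (use G in auto)
  thus ?thesis using G by blast
qed

lemma
  assumes M: "csubspace M" "cclosed M" and F: "bop M F"
  shows adj_bop: "bop M (adj M F)"
    and adj_cinner: "\<And>x y. x \<in> M \<Longrightarrow> y \<in> M \<Longrightarrow> cinner (F x) y = cinner x (adj M F y)"
proof -
  have "bop M (adj M F) \<and> (\<forall>x\<in>M. \<forall>y\<in>M. cinner (F x) y = cinner x (adj M F y))"
    unfolding adj_def by (rule someI_ex[OF adjoint_exists[OF M F]])
  thus "bop M (adj M F)" "\<And>x y. x \<in> M \<Longrightarrow> y \<in> M \<Longrightarrow> cinner (F x) y = cinner x (adj M F y)" by auto
qed

lemma adj_cinner_left:
  assumes M: "csubspace M" "cclosed M" and F: "bop M F" and "x \<in> M" "y \<in> M"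
  shows "cinner (adj M F x) y = cinner x (F y)"
  using adj_cinner[OF M F assms(5,4)] by (metis cinner_commute)

lemma adj_adj:
  assumes M: "csubspace M" "cclosed M" and F: "bop M F" and y: "y \<in> M"
  shows "adj M (adj M F) y = F y"
  using adj_bop[OF M adj_bop[OF M F]] F y adj_cinner[OF M adj_bop[OF M F]] adj_cinner_left[OF M F]
  by (intro csubspace_cinner_ext[OF M(1)]) (simp_all add: bopD_in)

lemma adj_product_identity:
  assumes M: "csubspace M" "cclosed M"
    and ops: "bop M a" "bop M b" "bop M c" "bop M d" "bop M e" "bop M f" "bop M g" "bop M h"
    and eq: "\<And>x. x \<in> M \<Longrightarrow> a (b x) + c (d x) = e (f x) + g (h x)"
    and x: "x \<in> M"
  shows "adj M b (adj M a x) + adj M d (adj M c x) = adj M f (adj M e x) + adj M h (adj M g x)"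
proof (rule csubspace_cinner_ext[OF M(1)])
  note in_M = bopD_in[OF adj_bop[OF M]] bopD_in ops
  show "adj M b (adj M a x) + adj M d (adj M c x) \<in> M" "adj M f (adj M e x) + adj M h (adj M g x) \<in> M"
    using x ops by (simp_all add: csubspace_add[OF M(1)] in_M)
  fix y assume y: "y \<in> M"
  have adj2: "cinner y (adj M q (adj M p x)) = cinner (p (q y)) x" if "bop M p" "bop M q" for p q
    using that x y by (simp add: adj_cinner[OF M, symmetric] in_M)
  show "cinner y (adj M b (adj M a x) + adj M d (adj M c x)) = cinner y (adj M f (adj M e x) + adj M h (adj M g x))"
    using eq[OF y] by (simp add: cinner_add_right adj2 ops cinner_add_left[symmetric])
qed

section \<open>Square roots of positive operators\<close>

text \<open>The coefficients of the binomial series of \<open>sqrt (1 - t)\<close>; the square root of \<open>I - Q\<close>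
  is obtained by substituting a self-adjoint contraction \<open>Q\<close> for \<open>t\<close>.\<close>

definition sqrt_coeff :: "nat \<Rightarrow> real" where "sqrt_coeff n = (-1)^n * ((1/2::real) gchoose n)"

lemma sqrt_coeff_0[simp]: "sqrt_coeff 0 = 1" by (simp add: sqrt_coeff_def)

lemma sqrt_coeff_Suc: "sqrt_coeff (Suc n) = sqrt_coeff n * (real n - 1/2) / real (Suc n)"
proof -
  define g where "g = ((1/2::real) gchoose n)"
  define g1 where "g1 = ((1/2::real) gchoose (Suc n))"
  have "(1/2::real) * g = real n * g + real (Suc n) * g1"
    unfolding g_def g1_def by (rule gbinomial_mult_1)
  hence h: "real (Suc n) * g1 = (1/2 - real n) * g" by (simp add: left_diff_distrib)
  hence h2: "g1 = (1/2 - real n) * g / real (Suc n)" by (simp add: eq_divide_eq mult.commute del: of_nat_Suc)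
  have "sqrt_coeff (Suc n) = - ((-1)^n * g1)" by (simp add: sqrt_coeff_def g1_def)
  also have "\<dots> = (-1)^n * g * (real n - 1/2) / real (Suc n)" by (simp add: h2 field_simps del: of_nat_Suc)
  also have "\<dots> = sqrt_coeff n * (real n - 1/2) / real (Suc n)" by (simp add: sqrt_coeff_def g_def)
  finally show ?thesis .
qed

lemma sqrt_coeff_convolution: "(\<Sum>i\<le>k. sqrt_coeff i * sqrt_coeff (k - i)) = (if k = 0 then 1 else if k = 1 then -1 else 0)"
proof -
  have "fps_binomial (1/2::real) * fps_binomial (1/2) = fps_binomial 1"
    by (simp flip: fps_binomial_add_mult)
  hence "fps_nth (fps_binomial (1/2::real) * fps_binomial (1/2)) k = fps_nth (1 + fps_X) k"
    by (simp add: fps_binomial_1)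
  hence e: "(\<Sum>i=0..k. ((1/2::real) gchoose i) * ((1/2) gchoose (k - i))) = (if k = 0 then 1 else if k = 1 then 1 else 0)"
    by (simp add: fps_mult_nth fps_X_def)
  have "(\<Sum>i\<le>k. sqrt_coeff i * sqrt_coeff (k - i)) = (-1)^k * (\<Sum>i=0..k. ((1/2::real) gchoose i) * ((1/2) gchoose (k - i)))"
    unfolding sum_distrib_left atLeast0AtMost
  proof (rule sum.cong)
    fix i assume "i \<in> {..k}"
    hence "(-1::real)^k = (-1)^i * (-1)^(k-i)" by (simp flip: power_add)
    thus "sqrt_coeff i * sqrt_coeff (k - i) = (-1)^k * (((1/2::real) gchoose i) * ((1/2) gchoose (k - i)))"
      by (simp add: sqrt_coeff_def)
  qed simp
  also have "\<dots> = (if k = 0 then 1 else if k = 1 then -1 else 0)" using e by simp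
  finally show ?thesis .
qed

definition sqrt_coeff_sum :: "nat \<Rightarrow> real" where "sqrt_coeff_sum N = (\<Sum>n\<le>N. sqrt_coeff n)"

lemma sqrt_coeff_sum_props: "sqrt_coeff_sum N \<ge> 0 \<and> sqrt_coeff (Suc N) = - sqrt_coeff_sum N / (2 * real N + 2) \<and> (sqrt_coeff_sum N)\<^sup>2 \<le> 1 / (2 * real N + 1)"
proof (induction N)
  case 0
  have "sqrt_coeff 1 = -1/2" using sqrt_coeff_Suc[of 0] by simp
  thus ?case by (simp add: sqrt_coeff_sum_def)
next
  case (Suc N)
  have p0: "sqrt_coeff_sum N \<ge> 0" and s: "sqrt_coeff (Suc N) = - sqrt_coeff_sum N / (2 * real N + 2)"
    and q: "(sqrt_coeff_sum N)\<^sup>2 \<le> 1 / (2 * real N + 1)" using Suc by auto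
  have ps: "sqrt_coeff_sum (Suc N) = sqrt_coeff_sum N * (2 * real N + 1) / (2 * real N + 2)"
    by (simp add: sqrt_coeff_sum_def s field_simps)
  have A: "sqrt_coeff_sum (Suc N) \<ge> 0" using p0 by (simp add: ps)
  have B: "sqrt_coeff (Suc (Suc N)) = - sqrt_coeff_sum (Suc N) / (2 * real (Suc N) + 2)"
    by (simp add: sqrt_coeff_Suc[of "Suc N"] s ps field_simps)
  have "(sqrt_coeff_sum (Suc N))\<^sup>2 = (sqrt_coeff_sum N)\<^sup>2 * ((2 * real N + 1) / (2 * real N + 2))\<^sup>2"
    by (simp add: ps power_mult_distrib power_divide)
  also have "\<dots> \<le> (1 / (2 * real N + 1)) * ((2 * real N + 1) / (2 * real N + 2))\<^sup>2"
    by (rule mult_right_mono[OF q]) simp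
  also have "\<dots> = (2 * real N + 1) / (2 * real N + 2)\<^sup>2"
    by (simp add: power2_eq_square divide_simps del: of_nat_Suc)
  also have "\<dots> \<le> 1 / (2 * real (Suc N) + 1)"
  proof -
    have "(2 * real N + 1) * (2 * real N + 3) \<le> (2 * real N + 2)\<^sup>2" by (simp add: power2_eq_square algebra_simps)
    thus ?thesis by (simp add: field_simps)
  qed
  finally show ?case using A B by simp
qed

lemma sqrt_coeff_sum_nonneg: "sqrt_coeff_sum N \<ge> 0" using sqrt_coeff_sum_props by blast

lemma sqrt_coeff_nonpos: "n \<ge> 1 \<Longrightarrow> sqrt_coeff n \<le> 0"
proof -
  assume "n \<ge> 1"
  then obtain N where "n = Suc N" by (cases n) auto
  thus ?thesis using sqrt_coeff_sum_props[of N] sqrt_coeff_sum_nonneg[of N] by (simp add: divide_nonneg_pos)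
qed

lemma sqrt_coeff_sum_tendsto: "sqrt_coeff_sum \<longlonglongrightarrow> 0"
proof -
  have b: "norm ((sqrt_coeff_sum N)\<^sup>2) \<le> inverse (real (Suc N))" for N
  proof -
    have "(sqrt_coeff_sum N)\<^sup>2 \<le> 1 / (2 * real N + 1)" using sqrt_coeff_sum_props by blast
    also have "\<dots> \<le> inverse (real (Suc N))" by (simp add: field_simps)
    finally show ?thesis by simp
  qed
  have "(\<lambda>N. (sqrt_coeff_sum N)\<^sup>2) \<longlonglongrightarrow> 0" by (rule tendsto_null_bound[OF b LIMSEQ_inverse_real_of_nat])
  hence "(\<lambda>N. sqrt ((sqrt_coeff_sum N)\<^sup>2)) \<longlonglongrightarrow> sqrt 0" by (rule tendsto_real_sqrt)
  thus ?thesis using sqrt_coeff_sum_nonneg by simp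
qed

lemma sum_abs_sqrt_coeff: "(\<Sum>n\<le>N. \<bar>sqrt_coeff n\<bar>) = 2 - sqrt_coeff_sum N"
proof (induction N)
  case 0 thus ?case by (simp add: sqrt_coeff_sum_def)
next
  case (Suc N)
  have "\<bar>sqrt_coeff (Suc N)\<bar> = - sqrt_coeff (Suc N)" using sqrt_coeff_nonpos[of "Suc N"] by simp
  thus ?case using Suc by (simp add: sqrt_coeff_sum_def)
qed

lemma sum_abs_sqrt_coeff_le: "(\<Sum>n<N. \<bar>sqrt_coeff n\<bar>) \<le> 2"
proof (cases N)
  case 0 thus ?thesis by simp
next
  case (Suc M)
  have "(\<Sum>n<N. \<bar>sqrt_coeff n\<bar>) = (\<Sum>n\<le>M. \<bar>sqrt_coeff n\<bar>)" using Suc by (simp add: lessThan_Suc_atMost)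
  thus ?thesis using sum_abs_sqrt_coeff[of M] sqrt_coeff_sum_nonneg[of M] by simp
qed

lemma summable_abs_sqrt_coeff: "summable (\<lambda>n. \<bar>sqrt_coeff n\<bar>)"
  by (rule summableI_nonneg_bounded[where x=2]) (simp_all add: sum_abs_sqrt_coeff_le)

lemma sum_sqrt_coeff_lessThan: "N \<ge> 1 \<Longrightarrow> (\<Sum>n<N. sqrt_coeff n) = sqrt_coeff_sum (N - 1)"
  by (cases N) (simp_all add: sqrt_coeff_sum_def lessThan_Suc_atMost)

lemma sum_square_triangle_split:
  fixes g :: "nat \<Rightarrow> nat \<Rightarrow> 'b::comm_monoid_add"
  shows "(\<Sum>m<N. \<Sum>n<N. g m n) = (\<Sum>k<N. \<Sum>i\<le>k. g i (k - i))
           + (\<Sum>(m,n)\<in>{(m,n). m < N \<and> n < N \<and> N \<le> m + n}. g m n)"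
proof -
  have "(\<Sum>m<N. \<Sum>n<N. g m n) = (\<Sum>(m,n)\<in>{..<N} \<times> {..<N}. g m n)"
    by (rule sum.cartesian_product)
  also have "{..<N} \<times> {..<N} = {(i,j). i + j < N} \<union> {(m,n). m < N \<and> n < N \<and> N \<le> m + n}"
    by auto
  also have "(\<Sum>(m,n)\<in>{(i,j). i + j < N} \<union> {(m,n). m < N \<and> n < N \<and> N \<le> m + n}. g m n)
      = (\<Sum>(m,n)\<in>{(i,j). i + j < N}. g m n) + (\<Sum>(m,n)\<in>{(m,n). m < N \<and> n < N \<and> N \<le> m + n}. g m n)"
  proof (rule sum.union_disjoint)
    show "finite {(i, j). i + j < N}"
      by (rule finite_subset[of _ "{..<N} \<times> {..<N}"]) auto
    show "finite {(m, n). m < N \<and> n < N \<and> N \<le> m + n}"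
      by (rule finite_subset[of _ "{..<N} \<times> {..<N}"]) auto
  qed auto
  also have "(\<Sum>(m,n)\<in>{(i,j). i + j < N}. g m n) = (\<Sum>k<N. \<Sum>i\<le>k. g i (k - i))"
    by (rule sum.triangle_reindex)
  finally show ?thesis .
qed

lemma sum_lessThan_two_supported:
  fixes g :: "nat \<Rightarrow> 'b::comm_monoid_add"
  assumes "2 \<le> N" "\<And>k. 2 \<le> k \<Longrightarrow> g k = 0"
  shows "(\<Sum>k<N. g k) = g 0 + g 1"
  using assms(1)
proof (induction N rule: nat_induct_at_least)
  case base
  have "{..<2::nat} = {0, 1}" by auto
  thus ?case by simp
next
  case (Suc n) thus ?case using assms(2) by simp
qed

lemma posop_cinner_zero:
  fixes A :: "'a::chilbert \<Rightarrow> 'a"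
  assumes A: "posop A" and y: "Re (cinner y (A y)) = 0"
  shows "A y = 0"
proof -
  have Ab: "bop UNIV A" and As: "\<And>x y. cinner (A x) y = cinner x (A y)"
    and Ap: "\<And>x. 0 \<le> Re (cinner x (A x))" using A by (auto simp: posop_def)
  define z where "z = A y"
  define \<alpha> where "\<alpha> = (cnorm z)\<^sup>2"
  define \<beta> where "\<beta> = Re (cinner z (A z))"
  have key: "0 \<le> 2 * s * \<alpha> + s\<^sup>2 * \<beta>" for s :: real
  proof -
    define v where "v = y + complex_of_real s *\<^sub>C z"
    have Av: "A v = A y + complex_of_real s *\<^sub>C A z"
      unfolding v_def using Ab by (simp add: bopD_add bopD_scale)
    have yz: "cinner y (A z) = cinner z z" using As[of y z] by (simp add: z_def)
    have "cinner v (A v) = cinner y (A y) + complex_of_real s * cinner y (A z)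
         + complex_of_real s * cinner z (A y) + complex_of_real s * complex_of_real s * cinner z (A z)"
      unfolding Av by (simp add: v_def cinner_add_left cinner_add_right cinner_scaleC_left cinner_scaleC_right algebra_simps)
    also have "\<dots> = cinner y (A y) + 2 * complex_of_real s * cinner z z + complex_of_real (s\<^sup>2) * cinner z (A z)"
      by (simp add: yz z_def[symmetric] power2_eq_square algebra_simps)
    finally have "Re (cinner v (A v)) = Re (cinner y (A y)) + 2 * s * \<alpha> + s\<^sup>2 * \<beta>"
      by (simp add: \<alpha>_def \<beta>_def cinner_self_cnorm)
    thus ?thesis using Ap[of v] y by simp
  qed
  have a0: "\<alpha> \<ge> 0" by (simp add: \<alpha>_def)
  have "\<alpha> \<le> 0"
  proof (cases "\<beta> \<le> 0")
    case True
    have "0 \<le> 2 * (-1) * \<alpha> + (-1)\<^sup>2 * \<beta>" by (rule key)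
    thus ?thesis using True by simp
  next
    case False
    have "0 \<le> 2 * (- \<alpha> / \<beta>) * \<alpha> + (- \<alpha> / \<beta>)\<^sup>2 * \<beta>" by (rule key)
    also have "\<dots> = - (\<alpha>\<^sup>2 / \<beta>)" using False by (simp add: power2_eq_square field_simps)
    finally have "\<alpha>\<^sup>2 / \<beta> \<le> 0" by simp
    hence "\<alpha>\<^sup>2 \<le> 0" using False by (simp add: divide_le_0_iff)
    thus ?thesis by simp
  qed
  hence "cnorm z = 0" using a0 by (simp add: \<alpha>_def)
  thus ?thesis by (simp add: z_def)
qed

locale selfadjoint_contraction =
  fixes Q :: "'a::chilbert \<Rightarrow> 'a"
  assumes Qbop: "bop UNIV Q"
    and Qsym: "\<And>x y. cinner (Q x) y = cinner x (Q y)"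
    and Qnorm: "\<And>x. cnorm (Q x) \<le> cnorm x"
begin

lemma Qpow_norm: "cnorm ((Q ^^ n) x) \<le> cnorm x"
proof (induction n arbitrary: x)
  case (Suc m)
  have "cnorm (Q ((Q ^^ m) x)) \<le> cnorm x" by (rule order_trans[OF Qnorm Suc.IH])
  thus ?case by simp
qed simp

lemma Qpow_bop: "bop UNIV (Q ^^ n)"
proof (induction n)
  case 0 thus ?case by (auto simp: bop_def intro!: exI[of _ 1])
next
  case (Suc n)
  have "cnorm ((Q ^^ Suc n) x) \<le> 1 * cnorm x" for x using Qpow_norm[of "Suc n" x] by simp
  hence "\<exists>K. \<forall>x. cnorm ((Q ^^ Suc n) x) \<le> K * cnorm x" by blast
  thus ?case using Suc Qbop unfolding bop_def by simp
qed

lemma Qpow_add: "(Q ^^ n) (x + y) = (Q ^^ n) x + (Q ^^ n) y"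
  using bopD_add[OF Qpow_bop] by simp

lemma Qpow_scaleC: "(Q ^^ n) (c *\<^sub>C x) = c *\<^sub>C (Q ^^ n) x"
  using bopD_scale[OF Qpow_bop] by simp

lemma Qpow_sum: "(Q ^^ n) (\<Sum>i\<in>A. f i) = (\<Sum>i\<in>A. (Q ^^ n) (f i))"
  by (rule bop_sum[OF Qpow_bop])

lemma Qpow_sym: "cinner ((Q ^^ n) x) y = cinner x ((Q ^^ n) y)"
proof (induction n arbitrary: x y)
  case (Suc n)
  have "cinner ((Q ^^ Suc n) x) y = cinner ((Q ^^ n) x) (Q y)" by (simp add: Qsym)
  also have "\<dots> = cinner x ((Q ^^ n) (Q y))" by (rule Suc)
  also have "(Q ^^ n) (Q y) = (Q ^^ Suc n) y" by (simp add: funpow_swap1)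
  finally show ?case .
qed simp

lemma Qpow_commute:
  assumes T: "bop UNIV T" "\<And>x. T (Q x) = Q (T x)"
  shows "T ((Q ^^ n) x) = (Q ^^ n) (T x)"
  by (induction n) (simp_all add: T(2))

definition sqrt_partial :: "nat \<Rightarrow> 'a \<Rightarrow> 'a" where
  "sqrt_partial N x = (\<Sum>n<N. complex_of_real (sqrt_coeff n) *\<^sub>C (Q ^^ n) x)"

lemma sqrt_partial_add: "sqrt_partial N (x + y) = sqrt_partial N x + sqrt_partial N y"
  by (simp add: sqrt_partial_def Qpow_add scaleC_add_right sum.distrib)

lemma sqrt_partial_scaleC: "sqrt_partial N (c *\<^sub>C x) = c *\<^sub>C sqrt_partial N x"
  by (simp add: sqrt_partial_def Qpow_scaleC scaleC_sum_right scaleC_scaleC mult.commute)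

lemma sqrt_partial_norm: "cnorm (sqrt_partial N x) \<le> 2 * cnorm x"
proof -
  have "cnorm (sqrt_partial N x) \<le> (\<Sum>n<N. cnorm (complex_of_real (sqrt_coeff n) *\<^sub>C (Q ^^ n) x))"
    unfolding sqrt_partial_def by (rule cnorm_sum)
  also have "\<dots> \<le> (\<Sum>n<N. \<bar>sqrt_coeff n\<bar> * cnorm x)"
    by (rule sum_mono) (simp add: cnorm_scaleC Qpow_norm mult_left_mono)
  also have "\<dots> = (\<Sum>n<N. \<bar>sqrt_coeff n\<bar>) * cnorm x" by (simp add: sum_distrib_right)
  also have "\<dots> \<le> 2 * cnorm x" by (rule mult_right_mono[OF sum_abs_sqrt_coeff_le cnorm_nonneg])
  finally show ?thesis .
qed

lemma sqrt_partial_diff_bound: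
  assumes "n \<le> m"
  shows "cnorm (sqrt_partial m x - sqrt_partial n x) \<le> (\<Sum>k\<in>{n..<m}. \<bar>sqrt_coeff k\<bar>) * cnorm x"
proof -
  have "sqrt_partial m x = sqrt_partial n x + (\<Sum>k\<in>{n..<m}. complex_of_real (sqrt_coeff k) *\<^sub>C (Q ^^ k) x)"
    unfolding sqrt_partial_def lessThan_atLeast0 using assms by (simp add: sum.atLeastLessThan_concat)
  hence "sqrt_partial m x - sqrt_partial n x = (\<Sum>k\<in>{n..<m}. complex_of_real (sqrt_coeff k) *\<^sub>C (Q ^^ k) x)" by simp
  hence "cnorm (sqrt_partial m x - sqrt_partial n x) \<le> (\<Sum>k\<in>{n..<m}. cnorm (complex_of_real (sqrt_coeff k) *\<^sub>C (Q ^^ k) x))"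
    using cnorm_sum by metis
  also have "\<dots> \<le> (\<Sum>k\<in>{n..<m}. \<bar>sqrt_coeff k\<bar> * cnorm x)"
    by (rule sum_mono) (simp add: cnorm_scaleC Qpow_norm mult_left_mono)
  also have "\<dots> = (\<Sum>k\<in>{n..<m}. \<bar>sqrt_coeff k\<bar>) * cnorm x" by (simp add: sum_distrib_right)
  finally show ?thesis .
qed

lemma sqrt_partial_convergent: "\<exists>L. cconv (\<lambda>N. sqrt_partial N x) L"
proof (rule cconv_Cauchy)
  fix e :: real assume e: "e > 0"
  define e' where "e' = e / (cnorm x + 1)"
  have e': "e' > 0" using e cnorm_nonneg[of x] by (simp add: e'_def)
  obtain N where N: "\<forall>m\<ge>N. \<forall>n. norm (\<Sum>k\<in>{m..<n}. \<bar>sqrt_coeff k\<bar>) < e'"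
    using summable_abs_sqrt_coeff[unfolded summable_Cauchy] e' by blast
  have "cnorm (sqrt_partial m x - sqrt_partial n x) < e" if "m \<ge> N" "n \<ge> N" for m n
  proof -
    have gen: "cnorm (sqrt_partial a x - sqrt_partial b x) < e" if "b \<le> a" "b \<ge> N" for a b
    proof -
      have "cnorm (sqrt_partial a x - sqrt_partial b x) \<le> (\<Sum>k\<in>{b..<a}. \<bar>sqrt_coeff k\<bar>) * cnorm x" by (rule sqrt_partial_diff_bound[OF that(1)])
      also have "\<dots> \<le> e' * cnorm x"
        using N that(2) by (intro mult_right_mono) (auto simp: cnorm_nonneg less_imp_le)
      also have "\<dots> < e"
      proof -
        have "e' * cnorm x < e' * (cnorm x + 1)" using e' by simp
        thus ?thesis using e cnorm_nonneg[of x] by (simp add: e'_def)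
      qed
      finally show ?thesis .
    qed
    show ?thesis
    proof (cases "n \<le> m")
      case True thus ?thesis using gen that by blast
    next
      case False thus ?thesis using gen[of m n] that cnorm_minus_commute by (metis nle_le)
    qed
  qed
  thus "\<exists>N. \<forall>m\<ge>N. \<forall>n\<ge>N. cnorm (sqrt_partial m x - sqrt_partial n x) < e" by blast
qed

definition sqrt_op :: "'a \<Rightarrow> 'a" where "sqrt_op x = (SOME L. cconv (\<lambda>N. sqrt_partial N x) L)"

lemma sqrt_partial_cconv: "cconv (\<lambda>N. sqrt_partial N x) (sqrt_op x)"
  unfolding sqrt_op_def using sqrt_partial_convergent by (rule someI_ex)

lemma sqrt_op_add: "sqrt_op (x + y) = sqrt_op x + sqrt_op y"
proof -
  have "cconv (\<lambda>N. sqrt_partial N x + sqrt_partial N y) (sqrt_op x + sqrt_op y)" by (rule cconv_add[OF sqrt_partial_cconv sqrt_partial_cconv])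
  hence "cconv (\<lambda>N. sqrt_partial N (x + y)) (sqrt_op x + sqrt_op y)" by (simp add: sqrt_partial_add)
  thus ?thesis using sqrt_partial_cconv cconv_unique by blast
qed

lemma sqrt_op_scaleC: "sqrt_op (c *\<^sub>C x) = c *\<^sub>C sqrt_op x"
proof -
  have "cconv (\<lambda>N. c *\<^sub>C sqrt_partial N x) (c *\<^sub>C sqrt_op x)" by (rule cconv_scaleC[OF sqrt_partial_cconv])
  hence "cconv (\<lambda>N. sqrt_partial N (c *\<^sub>C x)) (c *\<^sub>C sqrt_op x)" by (simp add: sqrt_partial_scaleC)
  thus ?thesis using sqrt_partial_cconv cconv_unique by blast
qed

lemma sqrt_op_norm: "cnorm (sqrt_op x) \<le> 2 * cnorm x"
proof -
  have "(\<lambda>N. cnorm (sqrt_partial N x)) \<longlonglongrightarrow> cnorm (sqrt_op x)" by (rule cconv_norm[OF sqrt_partial_cconv])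
  thus ?thesis by (rule LIMSEQ_le_const2) (use sqrt_partial_norm in auto)
qed

lemma sqrt_op_bop: "bop UNIV sqrt_op"
  unfolding bop_def using sqrt_op_add sqrt_op_scaleC sqrt_op_norm by blast

lemma sqrt_partial_sym: "cinner (sqrt_partial N x) y = cinner x (sqrt_partial N y)"
proof -
  have "cinner (sqrt_partial N x) y = (\<Sum>n<N. complex_of_real (sqrt_coeff n) * cinner ((Q ^^ n) x) y)"
    by (simp add: sqrt_partial_def cinner_sum_left cinner_scaleC_left)
  also have "\<dots> = (\<Sum>n<N. complex_of_real (sqrt_coeff n) * cinner x ((Q ^^ n) y))" by (simp add: Qpow_sym)
  also have "\<dots> = cinner x (sqrt_partial N y)" by (simp add: sqrt_partial_def cinner_sum_right cinner_scaleC_right)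
  finally show ?thesis .
qed

lemma sqrt_op_sym: "cinner (sqrt_op x) y = cinner x (sqrt_op y)"
proof -
  have a: "(\<lambda>N. cinner (sqrt_partial N x) y) \<longlonglongrightarrow> cinner (sqrt_op x) y" by (rule cconv_inner_left[OF sqrt_partial_cconv])
  have b: "(\<lambda>N. cinner x (sqrt_partial N y)) \<longlonglongrightarrow> cinner x (sqrt_op y)" by (rule cconv_inner[OF sqrt_partial_cconv])
  have a': "(\<lambda>N. cinner x (sqrt_partial N y)) \<longlonglongrightarrow> cinner (sqrt_op x) y" using a by (simp add: sqrt_partial_sym)
  show ?thesis by (rule LIMSEQ_unique[OF a' b])
qed

lemma sqrt_partial_pos: "0 \<le> Re (cinner x (sqrt_partial N x))"
proof -
  have "Re (cinner x (sqrt_partial N x)) = (\<Sum>n<N. sqrt_coeff n * Re (cinner x ((Q ^^ n) x)))"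
    by (simp add: sqrt_partial_def cinner_sum_right cinner_scaleC_right)
  also have "\<dots> \<ge> (\<Sum>n<N. sqrt_coeff n * (cnorm x)\<^sup>2)"
  proof (rule sum_mono)
    fix n assume "n \<in> {..<N}"
    show "sqrt_coeff n * (cnorm x)\<^sup>2 \<le> sqrt_coeff n * Re (cinner x ((Q ^^ n) x))"
    proof (cases "n = 0")
      case True thus ?thesis by (simp add: cnorm_sq)
    next
      case False
      hence sn: "sqrt_coeff n \<le> 0" using sqrt_coeff_nonpos by simp
      have "Re (cinner x ((Q ^^ n) x)) \<le> cnorm x * cnorm ((Q ^^ n) x)"
        using cinner_cauchy_schwarz[of x "(Q ^^ n) x"] complex_Re_le_cmod order_trans by blast
      also have "\<dots> \<le> cnorm x * cnorm x" by (rule mult_left_mono[OF Qpow_norm cnorm_nonneg])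
      finally have "Re (cinner x ((Q ^^ n) x)) \<le> (cnorm x)\<^sup>2" by (simp add: power2_eq_square)
      thus ?thesis using sn by (rule mult_left_mono_neg)
    qed
  qed
  finally have h: "(\<Sum>n<N. sqrt_coeff n) * (cnorm x)\<^sup>2 \<le> Re (cinner x (sqrt_partial N x))" by (simp add: sum_distrib_right)
  have "(\<Sum>n<N. sqrt_coeff n) \<ge> 0" by (cases "N = 0") (simp_all add: sum_sqrt_coeff_lessThan sqrt_coeff_sum_nonneg)
  hence "0 \<le> (\<Sum>n<N. sqrt_coeff n) * (cnorm x)\<^sup>2" by simp
  thus ?thesis using h by linarith
qed

lemma sqrt_op_pos: "0 \<le> Re (cinner x (sqrt_op x))"
proof -
  have "(\<lambda>N. cinner x (sqrt_partial N x)) \<longlonglongrightarrow> cinner x (sqrt_op x)" by (rule cconv_inner[OF sqrt_partial_cconv])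
  hence "(\<lambda>N. Re (cinner x (sqrt_partial N x))) \<longlonglongrightarrow> Re (cinner x (sqrt_op x))" by (rule tendsto_Re)
  thus ?thesis by (rule LIMSEQ_le_const) (use sqrt_partial_pos in auto)
qed

lemma sqrt_op_posop: "posop sqrt_op"
  unfolding posop_def using sqrt_op_bop sqrt_op_sym sqrt_op_pos by blast

lemma sqrt_op_commute:
  assumes T: "bop UNIV T" "\<And>x. T (Q x) = Q (T x)"
  shows "T (sqrt_op x) = sqrt_op (T x)"
proof -
  have "cconv (\<lambda>N. T (sqrt_partial N x)) (T (sqrt_op x))"
    by (rule bop_cconv[OF T(1) csubspace_UNIV _ _ sqrt_partial_cconv]) auto
  moreover have "T (sqrt_partial N x) = sqrt_partial N (T x)" for N
    using T by (simp add: sqrt_partial_def bop_sum bopD_scale Qpow_commute[OF T])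
  ultimately have "cconv (\<lambda>N. sqrt_partial N (T x)) (T (sqrt_op x))" by simp
  thus ?thesis using sqrt_partial_cconv cconv_unique by blast
qed

lemma sqrt_partial_square_expand: "sqrt_partial N (sqrt_partial N x) = (\<Sum>m<N. \<Sum>n<N. complex_of_real (sqrt_coeff m * sqrt_coeff n) *\<^sub>C (Q ^^ (m + n)) x)"
proof -
  have "sqrt_partial N (sqrt_partial N x) = (\<Sum>m<N. complex_of_real (sqrt_coeff m) *\<^sub>C (Q ^^ m) (\<Sum>n<N. complex_of_real (sqrt_coeff n) *\<^sub>C (Q ^^ n) x))"
    by (simp add: sqrt_partial_def)
  also have "\<dots> = (\<Sum>m<N. \<Sum>n<N. complex_of_real (sqrt_coeff m * sqrt_coeff n) *\<^sub>C (Q ^^ (m + n)) x)"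
    by (simp add: Qpow_sum Qpow_scaleC scaleC_sum_right scaleC_scaleC funpow_add)
  finally show ?thesis .
qed

lemma sqrt_partial_square_low_terms:
  assumes N: "N \<ge> 2"
  shows "(\<Sum>k<N. \<Sum>i\<le>k. complex_of_real (sqrt_coeff i * sqrt_coeff (k - i)) *\<^sub>C (Q ^^ (i + (k - i))) x)
    = x - Q x"
proof -
  have "(\<Sum>i\<le>k. complex_of_real (sqrt_coeff i * sqrt_coeff (k - i)) *\<^sub>C (Q ^^ (i + (k - i))) x)
      = complex_of_real (\<Sum>i\<le>k. sqrt_coeff i * sqrt_coeff (k - i)) *\<^sub>C (Q ^^ k) x" for k
    by (simp add: scaleC_sum_left)
  hence "(\<Sum>k<N. \<Sum>i\<le>k. complex_of_real (sqrt_coeff i * sqrt_coeff (k - i)) *\<^sub>C (Q ^^ (i + (k - i))) x)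
      = (\<Sum>k<N. complex_of_real (\<Sum>i\<le>k. sqrt_coeff i * sqrt_coeff (k - i)) *\<^sub>C (Q ^^ k) x)" by simp
  also have "\<dots> = x - Q x"
    by (subst sum_lessThan_two_supported[OF N])
       (simp_all add: sqrt_coeff_convolution scaleC_one scaleC_minus_left)
  finally show ?thesis .
qed

lemma sqrt_partial_square_bound:
  assumes N: "N \<ge> 2"
  shows "cnorm (sqrt_partial N (sqrt_partial N x) - (x - Q x)) \<le> (sqrt_coeff_sum (N - 1))\<^sup>2 * cnorm x"
proof -
  define C where "C = {(m,n). m < N \<and> n < N \<and> N \<le> m + n}"
  define g where "g m n = complex_of_real (sqrt_coeff m * sqrt_coeff n) *\<^sub>C (Q ^^ (m + n)) x" for m n
  have finC: "finite C" unfolding C_def by (rule finite_subset[of _ "{..<N} \<times> {..<N}"]) auto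
  have first: "(\<Sum>k<N. \<Sum>i\<le>k. g i (k - i)) = x - Q x"
    unfolding g_def by (rule sqrt_partial_square_low_terms[OF N])
  have SS: "sqrt_partial N (sqrt_partial N x) = (x - Q x) + (\<Sum>(m,n)\<in>C. g m n)"
    unfolding sqrt_partial_square_expand g_def[symmetric] C_def using sum_square_triangle_split[of g N] first by simp
  have realsplit: "(\<Sum>m<N. sqrt_coeff m) * (\<Sum>n<N. sqrt_coeff n) = (\<Sum>(m,n)\<in>C. sqrt_coeff m * sqrt_coeff n)"
  proof -
    have "(\<Sum>m<N. sqrt_coeff m) * (\<Sum>n<N. sqrt_coeff n) = (\<Sum>m<N. \<Sum>n<N. sqrt_coeff m * sqrt_coeff n)"
      by (simp add: sum_product)
    also have "\<dots> = (\<Sum>k<N. \<Sum>i\<le>k. sqrt_coeff i * sqrt_coeff (k - i)) + (\<Sum>(m,n)\<in>C. sqrt_coeff m * sqrt_coeff n)"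
      unfolding C_def by (rule sum_square_triangle_split)
    also have "(\<Sum>k<N. \<Sum>i\<le>k. sqrt_coeff i * sqrt_coeff (k - i)) = 0"
      by (subst sum_lessThan_two_supported[OF N]) (simp_all add: sqrt_coeff_convolution)
    finally show ?thesis by simp
  qed
  have Cpos: "sqrt_coeff m * sqrt_coeff n \<ge> 0" if "(m,n) \<in> C" for m n
  proof -
    have "m \<ge> 1" "n \<ge> 1" using that by (auto simp: C_def)
    thus ?thesis using sqrt_coeff_nonpos by (simp add: zero_le_mult_iff)
  qed
  have "cnorm (sqrt_partial N (sqrt_partial N x) - (x - Q x)) = cnorm (\<Sum>(m,n)\<in>C. g m n)" by (simp add: SS)
  also have "\<dots> \<le> (\<Sum>(m,n)\<in>C. cnorm (g m n))"
    using cnorm_sum[of "\<lambda>p. g (fst p) (snd p)" C] by (simp add: case_prod_beta)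
  also have "\<dots> \<le> (\<Sum>(m,n)\<in>C. sqrt_coeff m * sqrt_coeff n * cnorm x)"
  proof (rule sum_mono)
    fix p assume p: "p \<in> C"
    obtain m n where mn: "p = (m,n)" by (cases p)
    have "cnorm (g m n) = \<bar>sqrt_coeff m * sqrt_coeff n\<bar> * cnorm ((Q ^^ (m + n)) x)" by (simp add: g_def cnorm_scaleC del: of_real_mult)
    also have "\<dots> \<le> sqrt_coeff m * sqrt_coeff n * cnorm x" using Cpos[of m n] p mn
      by (simp add: mult_left_mono Qpow_norm)
    finally show "(case p of (m, n) \<Rightarrow> cnorm (g m n)) \<le> (case p of (m, n) \<Rightarrow> sqrt_coeff m * sqrt_coeff n * cnorm x)"
      by (simp add: mn)
  qed
  also have "\<dots> = (\<Sum>(m,n)\<in>C. sqrt_coeff m * sqrt_coeff n) * cnorm x"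
    by (simp add: sum_distrib_right case_prod_beta)
  also have "\<dots> = (sqrt_coeff_sum (N - 1))\<^sup>2 * cnorm x"
    using realsplit N sum_sqrt_coeff_lessThan[of N] by (simp add: power2_eq_square)
  finally show ?thesis .
qed

lemma sqrt_op_square: "sqrt_op (sqrt_op x) = x - Q x"
proof -
  have A: "cconv (\<lambda>N. sqrt_partial N (sqrt_partial N x)) (x - Q x)"
  proof (rule cconv_eventually_dominated[where Nst=2])
    show "cnorm (sqrt_partial N (sqrt_partial N x) - (x - Q x)) \<le> (sqrt_coeff_sum (N - 1))\<^sup>2 * cnorm x" if "N \<ge> 2" for N
      by (rule sqrt_partial_square_bound[OF that])
    have "(\<lambda>N. sqrt_coeff_sum (N - 1)) \<longlonglongrightarrow> 0"
      by (rule LIMSEQ_imp_Suc) (simp add: sqrt_coeff_sum_tendsto)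
    hence "(\<lambda>N. (sqrt_coeff_sum (N - 1))\<^sup>2 * cnorm x) \<longlonglongrightarrow> 0\<^sup>2 * cnorm x" by (intro tendsto_mult tendsto_power tendsto_const)
    thus "(\<lambda>N. (sqrt_coeff_sum (N - 1))\<^sup>2 * cnorm x) \<longlonglongrightarrow> 0" by simp
  qed
  have B: "cconv (\<lambda>N. sqrt_partial N (sqrt_partial N x)) (sqrt_op (sqrt_op x))"
  proof (rule cconv_dominated2[OF sqrt_partial_cconv[of x] sqrt_partial_cconv[of "sqrt_op x"], where a=2])
    fix N
    have "sqrt_partial N (sqrt_partial N x) - sqrt_op (sqrt_op x) = sqrt_partial N (sqrt_partial N x - sqrt_op x) + (sqrt_partial N (sqrt_op x) - sqrt_op (sqrt_op x))"
      using sqrt_partial_add[of N "sqrt_partial N x - sqrt_op x" "sqrt_op x"] by simp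
    hence "cnorm (sqrt_partial N (sqrt_partial N x) - sqrt_op (sqrt_op x)) \<le> cnorm (sqrt_partial N (sqrt_partial N x - sqrt_op x)) + cnorm (sqrt_partial N (sqrt_op x) - sqrt_op (sqrt_op x))"
      using cnorm_triangle by metis
    also have "\<dots> \<le> 2 * cnorm (sqrt_partial N x - sqrt_op x) + cnorm (sqrt_partial N (sqrt_op x) - sqrt_op (sqrt_op x))"
      using sqrt_partial_norm by simp
    finally show "cnorm (sqrt_partial N (sqrt_partial N x) - sqrt_op (sqrt_op x)) \<le> 2 * cnorm (sqrt_partial N x - sqrt_op x) + cnorm (sqrt_partial N (sqrt_op x) - sqrt_op (sqrt_op x))" .
  qed
  show ?thesis using cconv_unique[OF B A] .
qed

lemma sqrt_op_unique:
  assumes T: "posop T" "\<And>x. T (T x) = x - Q x"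
  shows "T = sqrt_op"
proof -
  have Tb: "bop UNIV T" and Ts: "\<And>x y. cinner (T x) y = cinner x (T y)"
    using T(1) by (auto simp: posop_def)
  have TQ: "T (Q x) = Q (T x)" for x
  proof -
    have "Q x = x - T (T x)" using T(2)[of x] by simp
    hence "T (Q x) = T x - T (T (T x))" using Tb bop_diff[OF Tb csubspace_UNIV] by simp
    also have "\<dots> = Q (T x)" using T(2)[of "T x"] by simp
    finally show ?thesis .
  qed
  have RT: "T (sqrt_op x) = sqrt_op (T x)" for x by (rule sqrt_op_commute[OF Tb TQ])
  have Rd: "sqrt_op (a - b) = sqrt_op a - sqrt_op b" for a b by (rule bop_diff[OF sqrt_op_bop csubspace_UNIV]) auto
  have Td: "T (a - b) = T a - T b" for a b by (rule bop_diff[OF Tb csubspace_UNIV]) auto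
  show ?thesis
  proof (rule ext)
    fix x
    define y where "y = sqrt_op x - T x"
    have "sqrt_op y + T y = 0"
      unfolding y_def Rd Td sqrt_op_square RT T(2) by simp
    hence "cinner y (sqrt_op y) + cinner y (T y) = 0" by (metis cinner_add_right cinner_zero_right)
    hence "Re (cinner y (sqrt_op y)) + Re (cinner y (T y)) = 0" by (metis plus_complex.sel(1) zero_complex.sel(1))
    moreover have "0 \<le> Re (cinner y (sqrt_op y))" by (rule sqrt_op_pos)
    moreover have "0 \<le> Re (cinner y (T y))" using T(1) by (simp add: posop_def)
    ultimately have "Re (cinner y (sqrt_op y)) = 0" "Re (cinner y (T y)) = 0" by linarith+
    hence "sqrt_op y = 0" "T y = 0" using posop_cinner_zero sqrt_op_posop T(1) by blast+
    hence yy: "sqrt_op y - T y = 0" by simp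
    have "cinner y y = cinner (sqrt_op x - T x) y" by (simp add: y_def)
    also have "\<dots> = cinner x (sqrt_op y - T y)" by (simp add: cinner_diff_left cinner_diff_right sqrt_op_sym Ts)
    also have "\<dots> = 0" by (simp add: yy)
    finally have "y = 0" using cinner_eq_zero by blast
    thus "T x = sqrt_op x" by (simp add: y_def)
  qed
qed

lemma THE_sqrt_op: "(THE D. posop D \<and> (\<forall>x. D (D x) = x - Q x)) = sqrt_op"
proof (rule the_equality)
  show "posop sqrt_op \<and> (\<forall>x. sqrt_op (sqrt_op x) = x - Q x)" using sqrt_op_posop sqrt_op_square by blast
  fix D assume h: "posop D \<and> (\<forall>x. D (D x) = x - Q x)"
  hence "posop D" "\<And>x. D (D x) = x - Q x" by auto
  thus "D = sqrt_op" by (rule sqrt_op_unique)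
qed

end

section \<open>The defect operator\<close>

lemma selfadjoint_contraction_adj_mult:
  assumes P: "bop UNIV P" and contr: "\<And>x. cnorm (P x) \<le> cnorm x"
  shows "selfadjoint_contraction (\<lambda>x. adj UNIV P (P x))"
proof
  note adj_UNIV = adj_bop[OF csubspace_UNIV cclosed_UNIV P] adj_cinner[OF csubspace_UNIV cclosed_UNIV P]
    adj_cinner_left[OF csubspace_UNIV cclosed_UNIV P]
  show "bop UNIV (\<lambda>x. adj UNIV P (P x))"
  proof -
    obtain K where K: "K \<ge> 0" "\<And>x. cnorm (adj UNIV P x) \<le> K * cnorm x"
      using bopD_bound[OF adj_UNIV(1)] by auto
    have "cnorm (adj UNIV P (P x)) \<le> K * cnorm x" for x
      using K(2)[of "P x"] mult_left_mono[OF contr K(1)] by (rule order_trans)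
    thus ?thesis using P adj_UNIV(1) unfolding bop_def by auto
  qed
  show "cinner (adj UNIV P (P x)) y = cinner x (adj UNIV P (P y))" for x y
    by (simp add: adj_UNIV)
  show "cnorm (adj UNIV P (P x)) \<le> cnorm x" for x
  proof -
    define z where "z = adj UNIV P (P x)"
    have "(cnorm z)\<^sup>2 = Re (cinner (P x) (P z))" by (simp add: cnorm_sq z_def adj_UNIV)
    also have "\<dots> \<le> cnorm (P x) * cnorm (P z)"
      using cinner_cauchy_schwarz[of "P x" "P z"] complex_Re_le_cmod order_trans by blast
    also have "\<dots> \<le> cnorm x * cnorm z" by (rule mult_mono[OF contr contr cnorm_nonneg cnorm_nonneg])
    finally have "cnorm z * cnorm z \<le> cnorm x * cnorm z" by (simp add: power2_eq_square)
    thus "cnorm z \<le> cnorm x" using cnorm_nonneg[of x] cnorm_nonneg[of z]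
      by (cases "cnorm z = 0") (simp_all add: order_le_less)
  qed
qed

lemma defect_posop_square:
  assumes P: "bop UNIV P" and contr: "\<And>x. cnorm (P x) \<le> cnorm x"
  shows "posop (defect P)" "\<And>x. defect P (defect P x) = x - adj UNIV P (P x)"
proof -
  interpret selfadjoint_contraction "\<lambda>x. adj UNIV P (P x)"
    by (rule selfadjoint_contraction_adj_mult[OF P contr])
  have "defect P = sqrt_op" unfolding defect_def by (rule THE_sqrt_op)
  thus "posop (defect P)" "\<And>x. defect P (defect P x) = x - adj UNIV P (P x)"
    using sqrt_op_posop sqrt_op_square by auto
qed

definition range_closure :: "('a::chilbert \<Rightarrow> 'a) \<Rightarrow> 'a set" where
  "range_closure T = {x. \<forall>e>0. \<exists>y. cnorm (x - T y) < e}"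

lemma defect_space_eq_range_closure: "defect_space P = range_closure (defect P)"
  by (simp add: defect_space_def range_closure_def)

lemma range_in_range_closure: "T y \<in> range_closure T"
  unfolding range_closure_def by (auto intro!: exI[of _ y])

lemma range_closureD: "x \<in> range_closure T \<Longrightarrow> e > 0 \<Longrightarrow> \<exists>y. cnorm (x - T y) < e"
  by (simp add: range_closure_def)

lemma csubspace_range_closure:
  assumes T: "bop UNIV T"
  shows "csubspace (range_closure T)"
  unfolding csubspace_def
proof (intro conjI ballI allI)
  show "0 \<in> range_closure T" using range_in_range_closure[of T 0] bop_zero[OF T csubspace_UNIV] by simp
  fix x y c assume x: "x \<in> range_closure T" and y: "y \<in> range_closure T"
  show "x + y \<in> range_closure T" unfolding range_closure_def
  proof (intro CollectI allI impI)
    fix e :: real assume "e > 0"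
    then obtain a b where a: "cnorm (x - T a) < e/2" and b: "cnorm (y - T b) < e/2"
      using range_closureD[OF x, of "e/2"] range_closureD[OF y, of "e/2"] by auto
    have "x + y - T (a + b) = (x - T a) + (y - T b)" using bopD_add[OF T] by simp
    hence "cnorm (x + y - T (a + b)) \<le> cnorm (x - T a) + cnorm (y - T b)" by (metis cnorm_triangle)
    hence "cnorm (x + y - T (a + b)) < e" using a b by linarith
    thus "\<exists>z. cnorm (x + y - T z) < e" by blast
  qed
  show "c *\<^sub>C x \<in> range_closure T" unfolding range_closure_def
  proof (intro CollectI allI impI)
    fix e :: real assume e: "e > 0"
    have "e / (cmod c + 1) > 0" using e by (simp add: add_nonneg_pos)
    then obtain a where a: "cnorm (x - T a) < e / (cmod c + 1)" using range_closureD[OF x] by blast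
    have "cnorm (c *\<^sub>C x - T (c *\<^sub>C a)) = cmod c * cnorm (x - T a)"
      using bopD_scale[OF T] by (simp add: scaleC_diff_right[symmetric] cnorm_scaleC)
    also have "\<dots> \<le> cmod c * (e / (cmod c + 1))" by (rule mult_left_mono[OF less_imp_le[OF a] norm_ge_zero])
    also have "\<dots> = e * (cmod c / (cmod c + 1))" by simp
    also have "\<dots> < e * 1"
      using e by (intro mult_strict_left_mono) (simp_all add: divide_less_eq_1 add_nonneg_pos)
    finally show "\<exists>z. cnorm (c *\<^sub>C x - T z) < e" by auto
  qed
qed

lemma cclosed_range_closure: "cclosed (range_closure T)"
  unfolding cclosed_def
proof (intro allI impI)
  fix X L assume X: "\<forall>n. X n \<in> range_closure T" and c: "cconv X L"
  show "L \<in> range_closure T" unfolding range_closure_def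
  proof (intro CollectI allI impI)
    fix e :: real assume e: "e > 0"
    obtain N where N: "\<forall>n\<ge>N. cnorm (X n - L) < e/2" using cconvD[OF c, of "e/2"] e by auto
    obtain a where a: "cnorm (X N - T a) < e/2" using range_closureD[of "X N" T "e/2"] X e by auto
    have "cnorm (L - T a) \<le> cnorm (L - X N) + cnorm (X N - T a)" by (rule cnorm_diff_triangle)
    moreover have "cnorm (L - X N) < e/2" using N cnorm_minus_commute by (metis order_refl)
    ultimately show "\<exists>y. cnorm (L - T y) < e" using a by (intro exI[of _ a]) linarith
  qed
qed

text \<open>The kernel of a self-adjoint operator is orthogonal to its range.\<close>

lemma selfadjoint_range_closure_kernel:
  assumes T: "\<And>x y. cinner (T x) y = cinner x (T y)"
    and x: "x \<in> range_closure T" and Tx: "T x = 0"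
  shows "x = 0"
proof (rule ccontr)
  assume "x \<noteq> 0"
  hence pos: "cnorm x > 0" using cnorm_nonneg[of x] by (simp add: order_le_less)
  then obtain y where y: "cnorm (x - T y) < cnorm x / 2" using range_closureD[OF x, of "cnorm x / 2"] by auto
  have "cinner x (T y) = 0" using T[of x y] Tx by simp
  hence "(cnorm x)\<^sup>2 = Re (cinner x (x - T y))" by (simp add: cnorm_sq cinner_diff_right)
  also have "\<dots> \<le> cnorm x * cnorm (x - T y)"
    using cinner_cauchy_schwarz[of x "x - T y"] complex_Re_le_cmod order_trans by blast
  also have "\<dots> < cnorm x * (cnorm x / 2)" using y pos by simp
  finally show False using pos by (simp add: power2_eq_square)
qed

lemma selfadjoint_range_closure_inj:
  assumes T: "bop UNIV T" "\<And>x y. cinner (T x) y = cinner x (T y)"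
    and x: "x \<in> range_closure T" and y: "y \<in> range_closure T" and eq: "T x = T y"
  shows "x = y"
  using selfadjoint_range_closure_kernel[OF T(2) csubspace_diff[OF csubspace_range_closure[OF T(1)] x y]]
    eq bop_diff[OF T(1) csubspace_UNIV] by simp

lemma defect_space_props:
  assumes P: "bop UNIV P" "\<And>x. cnorm (P x) \<le> cnorm x"
  shows "bop UNIV (defect P)" "\<And>x y. cinner (defect P x) y = cinner x (defect P y)"
    "csubspace (defect_space P)" "cclosed (defect_space P)" "\<And>h. defect P h \<in> defect_space P"
    "\<And>x y. x \<in> defect_space P \<Longrightarrow> y \<in> defect_space P \<Longrightarrow> defect P x = defect P y \<Longrightarrow> x = y"
proof -
  show D: "bop UNIV (defect P)" "\<And>x y. cinner (defect P x) y = cinner x (defect P y)"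
    using defect_posop_square(1)[OF P] unfolding posop_def by auto
  show "csubspace (defect_space P)" "cclosed (defect_space P)" "\<And>h. defect P h \<in> defect_space P"
    "\<And>x y. x \<in> defect_space P \<Longrightarrow> y \<in> defect_space P \<Longrightarrow> defect P x = defect P y \<Longrightarrow> x = y"
    unfolding defect_space_eq_range_closure
    using csubspace_range_closure[OF D(1)] cclosed_range_closure range_in_range_closure
      selfadjoint_range_closure_inj[OF D] by auto
qed

section \<open>Tetrablock contractions\<close>

lemma norm_vec2: "norm (v :: complex^2) = sqrt ((cmod (v$1))\<^sup>2 + (cmod (v$2))\<^sup>2)"
  by (simp add: norm_vec_def L2_set_def UNIV_2)

lemma matrix_vector_mult_2: "((M :: complex^2^2) *v v) $ i = M$i$1 * v$1 + M$i$2 * v$2"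
  by (simp add: matrix_vector_mult_def UNIV_2)

lemma lagrange_identity_2:
  "((cmod a)\<^sup>2 + (cmod c)\<^sup>2) * ((cmod b)\<^sup>2 + (cmod d)\<^sup>2) = (cmod (a*d - b*c))\<^sup>2 + (cmod (a * cnj b + c * cnj d))\<^sup>2"
  by (simp only: cmod_power2) (simp add: power2_eq_square algebra_simps)

lemma contraction_det_le_1:
  fixes M :: "complex^2^2"
  assumes "\<forall>x. norm (M *v x) \<le> norm x"
  shows "cmod (det M) \<le> 1"
proof -
  define e1 :: "complex^2" where "e1 = (\<chi> i. if i = 1 then 1 else 0)"
  define e2 :: "complex^2" where "e2 = (\<chi> i. if i = 2 then 1 else 0)"
  have "norm (M *v e1) = sqrt ((cmod (M$1$1))\<^sup>2 + (cmod (M$2$1))\<^sup>2)"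
    "norm (M *v e2) = sqrt ((cmod (M$1$2))\<^sup>2 + (cmod (M$2$2))\<^sup>2)" "norm e1 = 1" "norm e2 = 1"
    by (simp_all add: norm_vec2 matrix_vector_mult_2 e1_def e2_def)
  hence "(cmod (M$1$1))\<^sup>2 + (cmod (M$2$1))\<^sup>2 \<le> 1" "(cmod (M$1$2))\<^sup>2 + (cmod (M$2$2))\<^sup>2 \<le> 1"
    using assms by (metis real_sqrt_le_1_iff)+
  hence "((cmod (M$1$1))\<^sup>2 + (cmod (M$2$1))\<^sup>2) * ((cmod (M$1$2))\<^sup>2 + (cmod (M$2$2))\<^sup>2) \<le> 1 * 1"
    by (intro mult_mono) auto
  hence "(cmod (det M))\<^sup>2 + (cmod (M$1$1 * cnj (M$1$2) + M$2$1 * cnj (M$2$2)))\<^sup>2 \<le> 1"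
    using lagrange_identity_2[of "M$1$1" "M$2$1" "M$1$2" "M$2$2"] by (simp add: det_2)
  hence "(cmod (det M))\<^sup>2 \<le> 1" by (smt (verit) zero_le_power2)
  thus ?thesis by (simp add: power_le_one_iff abs_square_le_1)
qed

lemma tetrablock_closed_cmod_le_1: "z \<in> tetrablock_closed \<Longrightarrow> cmod (snd (snd z)) \<le> 1"
  unfolding tetrablock_closed_def using contraction_det_le_1 by auto

lemma tetrablock_closed_nonempty: "tetrablock_closed \<noteq> {}"
  unfolding tetrablock_closed_def by (auto intro!: exI[of _ "0 :: complex^2^2"])

text \<open>The von Neumann inequality for the coordinate function \<open>(z\<^sub>1, z\<^sub>2, z\<^sub>3) \<mapsto> z\<^sub>3\<close>, written as the
  quotient \<open>z\<^sub>3 / 1\<close>.\<close>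

lemma tetrablock_contraction_contractive:
  assumes tc: "tetrablock_contraction A B P"
  shows "cnorm (P x) \<le> cnorm x"
proof -
  define S :: "(nat \<times> nat \<times> nat) set" where "S = {(0,0,0), (0,0,1)}"
  define q :: "nat \<times> nat \<times> nat \<Rightarrow> complex" where "q t = (if t = (0,0,0) then 1 else 0)" for t
  define p :: "nat \<times> nat \<times> nat \<Rightarrow> complex" where "p t = (if t = (0,0,1) then 1 else 0)" for t
  have pq: "poly3 S q z = 1" "poly3 S p z = snd (snd z)" for z
    by (simp_all add: poly3_def S_def q_def p_def)
  have opq: "opoly3 S q A B P y = y" "opoly3 S p A B P y = P y" for y
    by (simp_all add: opoly3_def S_def q_def p_def scaleC_one)
  have "bop UNIV (\<lambda>x. x)" by (auto simp: bop_def intro!: exI[of _ 1])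
  moreover have "finite S" by (simp add: S_def)
  moreover note tc[unfolded tetrablock_contraction_def, THEN conjunct2, THEN conjunct2, THEN conjunct2,
      THEN conjunct2, THEN conjunct2, THEN conjunct2, THEN conjunct2, rule_format, of S q "\<lambda>x. x" p]
  ultimately have "cnorm (P x) \<le> (SUP z\<in>tetrablock_closed. cmod (snd (snd z))) * cnorm x"
    by (simp add: pq opq)
  also have "\<dots> \<le> 1 * cnorm x"
    by (intro mult_right_mono cSUP_least tetrablock_closed_nonempty tetrablock_closed_cmod_le_1 cnorm_nonneg)
  finally show ?thesis by simp
qed

text \<open>Applying \<open>D\<^sub>P\<close> to both sides gives \<open>A - P\<^sup>*P A\<close>, and \<open>D\<^sub>P\<close> is injective on \<open>\<D>\<^sub>P\<close>.\<close>

lemma defect_intertwining: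
  fixes A B P F1 F2 :: "'a::chilbert \<Rightarrow> 'a"
  defines "D \<equiv> defect P" and "DP \<equiv> defect_space P"
  assumes P: "bop UNIV P" "\<And>x. cnorm (P x) \<le> cnorm x"
    and A: "bop UNIV A" and B: "bop UNIV B" and AP: "\<And>x. A (P x) = P (A x)"
    and F1: "bop DP F1" and F2: "bop DP F2"
    and fund1: "\<And>h. A h - adj UNIV B (P h) = D (F1 (D h))"
    and fund2: "\<And>h. B h - adj UNIV A (P h) = D (F2 (D h))"
  shows "D (A h) = F1 (D h) + adj DP F2 (D (P h))"
proof -
  note D = defect_space_props[OF P, folded D_def DP_def]
  have D_sq: "D (D x) = x - adj UNIV P (P x)" for x unfolding D_def by (rule defect_posop_square(2)[OF P])
  note UNIV_adj = adj_cinner[OF csubspace_UNIV cclosed_UNIV] adj_cinner_left[OF csubspace_UNIV cclosed_UNIV]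
  have DF2D: "D (adj DP F2 (D z)) = adj UNIV B z - adj UNIV P (A z)" for z
  proof (rule csubspace_cinner_ext[OF csubspace_UNIV UNIV_I UNIV_I])
    fix x
    have "cinner x (D (adj DP F2 (D z))) = cinner (D (F2 (D x))) z"
      using adj_cinner[OF D(3,4) F2 D(5) D(5)] by (simp add: D(2)[symmetric])
    also have "\<dots> = cinner x (adj UNIV B z - adj UNIV P (A z))"
      by (simp flip: fund2 add: cinner_diff_left cinner_diff_right UNIV_adj A B P(1))
    finally show "cinner x (D (adj DP F2 (D z))) = cinner x (adj UNIV B z - adj UNIV P (A z))" .
  qed
  have "D (F1 (D h) + adj DP F2 (D (P h))) = D (F1 (D h)) + D (adj DP F2 (D (P h)))"
    by (rule bopD_add[OF D(1)]) simp_all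
  also have "\<dots> = A h - adj UNIV P (P (A h))" by (simp flip: fund1 add: DF2D AP)
  also have "\<dots> = D (D (A h))" by (simp add: D_sq)
  finally show ?thesis
    using D(6) D(5) bopD_in[OF adj_bop[OF D(3,4) F2]] bopD_in[OF F1] csubspace_add[OF D(3)] by metis
qed

section \<open>Toeplitz operators with quadratic symbol\<close>

text \<open>\<open>lag f n k\<close> is the entry \<open>f (n - k)\<close> met by the coefficient of \<open>z\<^sup>k\<close> in row \<open>n\<close> of a Toeplitz
  matrix, with the convention that entries of negative index vanish.\<close>

definition lag :: "(nat \<Rightarrow> 'a::zero) \<Rightarrow> nat \<Rightarrow> nat \<Rightarrow> 'a" where
  "lag f n k = (if k \<le> n then f (n - k) else 0)"

lemma toeplitz_3:
  "toeplitz [a0, a1, a2] f n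
     = a0 (f n) + (if 1 \<le> n then a1 (f (n - 1)) else 0) + (if 2 \<le> n then a2 (f (n - 2)) else 0)"
  by (simp add: toeplitz_def eval_nat_numeral lessThan_Suc)

lemma toeplitz_3_lag:
  assumes "a1 0 = 0" "a2 0 = 0"
  shows "toeplitz [a0, a1, a2] f n = a0 (lag f n 0) + a1 (lag f n 1) + a2 (lag f n 2)"
  using assms by (simp add: toeplitz_3 lag_def)

lemma lag_toeplitz_3:
  assumes "a0 0 = 0" "a1 0 = 0" "a2 0 = 0"
  shows "lag (toeplitz [a0, a1, a2] f) n j = a0 (lag f n j) + a1 (lag f n (j + 1)) + a2 (lag f n (j + 2))"
proof (cases "j \<le> n")
  case True
  have "lag f (n - j) k = lag f n (j + k)" for k using True by (auto simp: lag_def diff_diff_add)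
  thus ?thesis using True toeplitz_3_lag[of a1 a2 a0 f "n - j", OF assms(2,3)] by (simp add: lag_def)
qed (use assms in \<open>simp add: lag_def\<close>)

lemma toeplitz_3_zero:
  assumes "a0 0 = 0" "a1 0 = 0" "a2 0 = 0"
  shows "toeplitz [a0, a1, a2] (\<lambda>_. 0) = (\<lambda>_. 0)"
  using assms by (simp add: toeplitz_3 fun_eq_iff)

lemma toeplitz_3_in:
  assumes M: "csubspace M" and a: "bop M a0" "bop M a1" "bop M a2" and f: "\<And>n. f n \<in> M"
  shows "toeplitz [a0, a1, a2] f n \<in> M"
  using M a f by (simp add: toeplitz_3 csubspace_add csubspace_zero bopD_in)

lemma toeplitz_3_add:
  assumes M: "csubspace M" and a: "bop M a0" "bop M a1" "bop M a2"
    and u: "\<And>n. u n \<in> M" and v: "\<And>n. v n \<in> M"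
  shows "toeplitz [a0, a1, a2] (\<lambda>m. u m + v m) n = toeplitz [a0, a1, a2] u n + toeplitz [a0, a1, a2] v n"
  using M a u v by (simp add: toeplitz_3 bopD_add algebra_simps)

text \<open>The coefficientwise form of \<open>\<phi>\<^sub>a \<phi>\<^sub>b = \<phi>\<^sub>b \<phi>\<^sub>a\<close> on \<open>M\<close>, for the operator polynomials
  \<open>\<phi>\<^sub>a(z) = a\<^sub>0 + a\<^sub>1 z + a\<^sub>2 z\<^sup>2\<close> and \<open>\<phi>\<^sub>b(z) = b\<^sub>0 + b\<^sub>1 z + b\<^sub>2 z\<^sup>2\<close>.\<close>

definition poly_symbols_commute ::
    "'a::chilbert set \<Rightarrow> ('a \<Rightarrow> 'a) \<Rightarrow> ('a \<Rightarrow> 'a) \<Rightarrow> ('a \<Rightarrow> 'a) \<Rightarrow> ('a \<Rightarrow> 'a) \<Rightarrow> ('a \<Rightarrow> 'a) \<Rightarrow> ('a \<Rightarrow> 'a) \<Rightarrow> bool"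
  where
  "poly_symbols_commute M a0 a1 a2 b0 b1 b2 \<longleftrightarrow> (\<forall>x\<in>M.
      a0 (b0 x) = b0 (a0 x)
    \<and> a0 (b1 x) + a1 (b0 x) = b0 (a1 x) + b1 (a0 x)
    \<and> a0 (b2 x) + a1 (b1 x) + a2 (b0 x) = b0 (a2 x) + b1 (a1 x) + b2 (a0 x)
    \<and> a1 (b2 x) + a2 (b1 x) = b1 (a2 x) + b2 (a1 x)
    \<and> a2 (b2 x) = b2 (a2 x))"

lemma toeplitz_3_toeplitz_3:
  fixes f :: "nat \<Rightarrow> 'a::chilbert" and n :: nat
  assumes M: "csubspace M" and a: "bop M a0" "bop M a1" "bop M a2" and b: "bop M b0" "bop M b1" "bop M b2"
    and f: "\<And>n. f n \<in> M"
  defines "y \<equiv> lag f n"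
  shows "toeplitz [a0, a1, a2] (toeplitz [b0, b1, b2] f) n
    = a0 (b0 (y 0)) + (a0 (b1 (y 1)) + a1 (b0 (y 1))) + (a0 (b2 (y 2)) + a1 (b1 (y 2)) + a2 (b0 (y 2)))
      + (a1 (b2 (y 3)) + a2 (b1 (y 3))) + a2 (b2 (y 4))"
proof -
  have zero: "a0 0 = 0" "a1 0 = 0" "a2 0 = 0" "b0 0 = 0" "b1 0 = 0" "b2 0 = 0"
    using a b M by (simp_all add: bop_zero)
  have "y k \<in> M" for k unfolding y_def lag_def using f csubspace_zero[OF M] by simp
  hence "b0 (y k) \<in> M" "b1 (y k) \<in> M" "b2 (y k) \<in> M" for k using b by (simp_all add: bopD_in)
  hence additive: "p (b0 (y k) + b1 (y (k + 1)) + b2 (y (k + 2)))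
      = p (b0 (y k)) + p (b1 (y (k + 1))) + p (b2 (y (k + 2)))" if "bop M p" for p k
    using that M by (simp add: bopD_add csubspace_add)
  show ?thesis
    using toeplitz_3_lag[of a1 a2 a0 "toeplitz [b0, b1, b2] f" n, OF zero(2,3)] lag_toeplitz_3[of b0 b1 b2, OF zero(4-6)]
      additive[OF a(1)] additive[OF a(2)] additive[OF a(3)]
    by (simp add: y_def[symmetric] eval_nat_numeral ac_simps)
qed

lemma delta_in_ell2: "x \<in> M \<Longrightarrow> 0 \<in> M \<Longrightarrow> (\<lambda>n. if n = 0 then x else 0) \<in> ell2 M"
  unfolding ell2_def by (auto intro!: summable_finite[of "{0}"] split: if_splits)

lemma toeplitz_3_commute_iff:
  assumes M: "csubspace M" and a: "bop M a0" "bop M a1" "bop M a2" and b: "bop M b0" "bop M b1" "bop M b2"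
  shows "(\<forall>f\<in>ell2 M. \<forall>n. toeplitz [a0, a1, a2] (toeplitz [b0, b1, b2] f) n
                          = toeplitz [b0, b1, b2] (toeplitz [a0, a1, a2] f) n)
     \<longleftrightarrow> poly_symbols_commute M a0 a1 a2 b0 b1 b2"
proof
  have zero: "a0 0 = 0" "a1 0 = 0" "a2 0 = 0" "b0 0 = 0" "b1 0 = 0" "b2 0 = 0"
    using a b M by (simp_all add: bop_zero)
  assume comm: "\<forall>f\<in>ell2 M. \<forall>n. toeplitz [a0, a1, a2] (toeplitz [b0, b1, b2] f) n
                             = toeplitz [b0, b1, b2] (toeplitz [a0, a1, a2] f) n"
  show "poly_symbols_commute M a0 a1 a2 b0 b1 b2" unfolding poly_symbols_commute_def
  proof
    fix x assume "x \<in> M"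
    \<comment> \<open>Row \<open>n\<close> of both products applied to \<open>(x, 0, 0, \<dots>)\<close> is the coefficient of \<open>z\<^sup>n\<close>.\<close>
    from comm delta_in_ell2[OF this csubspace_zero[OF M]]
    have "toeplitz [a0, a1, a2] (toeplitz [b0, b1, b2] (\<lambda>n. if n = 0 then x else 0)) n
        = toeplitz [b0, b1, b2] (toeplitz [a0, a1, a2] (\<lambda>n. if n = 0 then x else 0)) n" for n
      by blast
    from this[of 0] this[of 1] this[of 2] this[of 3] this[of 4]
    show "a0 (b0 x) = b0 (a0 x)
      \<and> a0 (b1 x) + a1 (b0 x) = b0 (a1 x) + b1 (a0 x)
      \<and> a0 (b2 x) + a1 (b1 x) + a2 (b0 x) = b0 (a2 x) + b1 (a1 x) + b2 (a0 x)
      \<and> a1 (b2 x) + a2 (b1 x) = b1 (a2 x) + b2 (a1 x)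
      \<and> a2 (b2 x) = b2 (a2 x)"
      by (simp add: toeplitz_3 zero)
  qed
next
  assume "poly_symbols_commute M a0 a1 a2 b0 b1 b2"
  moreover have "lag f n k \<in> M" if "f \<in> ell2 M" for f n k
    using that csubspace_zero[OF M] by (simp add: lag_def ell2_def)
  ultimately show "\<forall>f\<in>ell2 M. \<forall>n. toeplitz [a0, a1, a2] (toeplitz [b0, b1, b2] f) n
                              = toeplitz [b0, b1, b2] (toeplitz [a0, a1, a2] f) n"
    by (auto simp: toeplitz_3_toeplitz_3[OF M a b] toeplitz_3_toeplitz_3[OF M b a] ell2_def
        poly_symbols_commute_def)
qed

section \<open>Block operators on \<open>\<H> \<oplus> \<ell>\<^sup>2(\<D>\<^sub>P)\<close>\<close>

text \<open>\<open>dilation_block D T a\<^sub>0 a\<^sub>1 a\<^sub>2\<close> is the block operator \<open>[[T, 0], [C, T\<^sub>\<phi>]]\<close> with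
  \<open>\<phi>(z) = a\<^sub>0 + a\<^sub>1 z + a\<^sub>2 z\<^sup>2\<close> and \<open>C h = (a\<^sub>1 D h, a\<^sub>2 D h, 0, 0, \<dots>)\<close>; all of \<open>V\<^sub>1, V\<^sub>2, V\<^sub>3\<close> have this form.\<close>

definition dilation_column :: "('a \<Rightarrow> 'a) \<Rightarrow> ('a \<Rightarrow> 'a) \<Rightarrow> ('a \<Rightarrow> 'a) \<Rightarrow> 'a \<Rightarrow> nat \<Rightarrow> 'a::chilbert" where
  "dilation_column D a1 a2 h n = (if n = 0 then a1 (D h) else if n = 1 then a2 (D h) else 0)"

definition dilation_block ::
    "('a \<Rightarrow> 'a) \<Rightarrow> ('a \<Rightarrow> 'a) \<Rightarrow> ('a \<Rightarrow> 'a) \<Rightarrow> ('a \<Rightarrow> 'a) \<Rightarrow> ('a \<Rightarrow> 'a)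
      \<Rightarrow> 'a \<times> (nat \<Rightarrow> 'a) \<Rightarrow> 'a \<times> (nat \<Rightarrow> 'a::chilbert)" where
  "dilation_block D T a0 a1 a2 =
     (\<lambda>(h, f). (T h, \<lambda>n. dilation_column D a1 a2 h n + toeplitz [a0, a1, a2] f n))"

lemma dilation_block_comp:
  assumes M: "csubspace M" and a: "bop M a0" "bop M a1" "bop M a2" and b: "bop M b0" "bop M b1" "bop M b2"
    and D: "\<And>h. D h \<in> M" and f: "\<And>n. f n \<in> M"
  shows "dilation_block D T a0 a1 a2 (dilation_block D S b0 b1 b2 (h, f))
    = (T (S h), \<lambda>n. (dilation_column D a1 a2 (S h) n + toeplitz [a0, a1, a2] (dilation_column D b1 b2 h) n)
                     + toeplitz [a0, a1, a2] (toeplitz [b0, b1, b2] f) n)"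
proof -
  have "dilation_column D b1 b2 h n \<in> M" for n
    using D b M by (simp add: dilation_column_def bopD_in csubspace_zero)
  with toeplitz_3_in[OF M b f] show ?thesis
    by (simp add: dilation_block_def toeplitz_3_add[OF M a] add.assoc)
qed

text \<open>Only row \<open>0\<close> imposes a condition; the other rows follow from the coefficient identities.\<close>

lemma dilation_column_commute_iff:
  assumes M: "csubspace M" and a: "bop M a0" "bop M a1" "bop M a2" and b: "bop M b0" "bop M b1" "bop M b2"
    and D: "\<And>h. D h \<in> M" and comm: "poly_symbols_commute M a0 a1 a2 b0 b1 b2"
    and DT: "\<And>h. D (T h) = a0 (D h) + a2 (D (P h))" and DS: "\<And>h. D (S h) = b0 (D h) + b2 (D (P h))"
  shows "(\<forall>n. dilation_column D a1 a2 (S h) n + toeplitz [a0, a1, a2] (dilation_column D b1 b2 h) n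
            = dilation_column D b1 b2 (T h) n + toeplitz [b0, b1, b2] (dilation_column D a1 a2 h) n)
     \<longleftrightarrow> a1 (b2 (D (P h))) = b1 (a2 (D (P h)))"
proof -
  have zero: "a0 0 = 0" "a1 0 = 0" "a2 0 = 0" "b0 0 = 0" "b1 0 = 0" "b2 0 = 0"
    using a b M by (simp_all add: bop_zero)
  define y w where "y = D h" and "w = D (P h)"
  have yw: "y \<in> M" "w \<in> M" using D by (simp_all add: y_def w_def)
  have add: "p (b0 y + b2 w) = p (b0 y) + p (b2 w)" "p (a0 y + a2 w) = p (a0 y) + p (a2 w)"
    if "bop M p" for p
    using that a b yw M by (simp_all add: bopD_add bopD_in)
  have c: "a0 (b0 y) = b0 (a0 y)" "a0 (b1 y) + a1 (b0 y) = b0 (a1 y) + b1 (a0 y)"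
    "a0 (b2 y) + a1 (b1 y) + a2 (b0 y) = b0 (a2 y) + b1 (a1 y) + b2 (a0 y)"
    "a1 (b2 y) + a2 (b1 y) = b1 (a2 y) + b2 (a1 y)" "a2 (b2 y) = b2 (a2 y)" "a2 (b2 w) = b2 (a2 w)"
    using comm yw by (simp_all add: poly_symbols_commute_def)
  have row: "dilation_column D a1 a2 (S h) n + toeplitz [a0, a1, a2] (dilation_column D b1 b2 h) n
      = dilation_column D b1 b2 (T h) n + toeplitz [b0, b1, b2] (dilation_column D a1 a2 h) n
    \<longleftrightarrow> (n = 0 \<longrightarrow> a1 (b2 w) = b1 (a2 w))" for n
  proof -
    consider "n = 0" | "n = 1" | "n = 2" | "n = 3" | "n \<ge> 4" by linarith
    thus ?thesis
    proof cases
      case 1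
      have "a1 (b0 y) + a1 (b2 w) + a0 (b1 y) = (a0 (b1 y) + a1 (b0 y)) + a1 (b2 w)"
        "b1 (a0 y) + b1 (a2 w) + b0 (a1 y) = (b0 (a1 y) + b1 (a0 y)) + b1 (a2 w)"
        by (simp_all add: ac_simps)
      hence "a1 (b0 y) + a1 (b2 w) + a0 (b1 y) = b1 (a0 y) + b1 (a2 w) + b0 (a1 y)
          \<longleftrightarrow> a1 (b2 w) = b1 (a2 w)"
        by (simp only: c(2) add_left_cancel)
      thus ?thesis using 1 by (simp add: dilation_column_def toeplitz_3 DT DS y_def[symmetric] w_def[symmetric] add a(2) b(2))
    next
      case 2
      have "a2 (b0 y) + a2 (b2 w) + (a0 (b2 y) + a1 (b1 y)) = b2 (a0 y) + b2 (a2 w) + (b0 (a2 y) + b1 (a1 y))"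
        using c(3,6) by (simp add: algebra_simps)
      thus ?thesis using 2 by (simp add: dilation_column_def toeplitz_3 DT DS y_def[symmetric] w_def[symmetric] add a(3) b(3))
    qed (use c(4,5) in \<open>auto simp: dilation_column_def toeplitz_3 zero y_def[symmetric]\<close>)
  qed
  show ?thesis unfolding row w_def by auto
qed

lemma dilation_blocks_commute_at:
  assumes M: "csubspace M" and a: "bop M a0" "bop M a1" "bop M a2" and b: "bop M b0" "bop M b1" "bop M b2"
    and D: "\<And>h. D h \<in> M" and TS: "T (S h) = S (T h)" and f: "f \<in> ell2 M"
  shows "dilation_block D T a0 a1 a2 (dilation_block D S b0 b1 b2 (h, f))
         = dilation_block D S b0 b1 b2 (dilation_block D T a0 a1 a2 (h, f))
     \<longleftrightarrow> (\<forall>n. (dilation_column D a1 a2 (S h) n + toeplitz [a0, a1, a2] (dilation_column D b1 b2 h) n)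
                + toeplitz [a0, a1, a2] (toeplitz [b0, b1, b2] f) n
             = (dilation_column D b1 b2 (T h) n + toeplitz [b0, b1, b2] (dilation_column D a1 a2 h) n)
                + toeplitz [b0, b1, b2] (toeplitz [a0, a1, a2] f) n)"
proof -
  have "\<And>n. f n \<in> M" using f by (simp add: ell2_def)
  thus ?thesis
    using dilation_block_comp[OF M a b D] dilation_block_comp[OF M b a D] TS by (simp add: fun_eq_iff)
qed

lemma dilation_blocks_commute_iff:
  assumes M: "csubspace M" and a: "bop M a0" "bop M a1" "bop M a2" and b: "bop M b0" "bop M b1" "bop M b2"
    and D: "\<And>h. D h \<in> M" "D 0 = 0"
    and TS: "\<And>h. T (S h) = S (T h)" "T 0 = 0" "S 0 = 0"
    and DT: "\<And>h. D (T h) = a0 (D h) + a2 (D (P h))" and DS: "\<And>h. D (S h) = b0 (D h) + b2 (D (P h))"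
  shows "(\<forall>k\<in>{(h, f). f \<in> ell2 M}.
            dilation_block D T a0 a1 a2 (dilation_block D S b0 b1 b2 k)
          = dilation_block D S b0 b1 b2 (dilation_block D T a0 a1 a2 k))
     \<longleftrightarrow> poly_symbols_commute M a0 a1 a2 b0 b1 b2 \<and> (\<forall>h. a1 (b2 (D (P h))) = b1 (a2 (D (P h))))"
    (is "?commute \<longleftrightarrow> ?symbols \<and> ?column")
proof -
  have zero: "a0 0 = 0" "a1 0 = 0" "a2 0 = 0" "b0 0 = 0" "b1 0 = 0" "b2 0 = 0"
    using a b M by (simp_all add: bop_zero)
  have column0: "dilation_column D a1 a2 0 = (\<lambda>_. 0)" "dilation_column D b1 b2 0 = (\<lambda>_. 0)"
    using zero D(2) by (auto simp: dilation_column_def)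
  note toeplitz0 = toeplitz_3_zero[of a0 a1 a2] toeplitz_3_zero[of b0 b1 b2]
  have 0: "(\<lambda>_. 0) \<in> ell2 M" by (simp add: ell2_def csubspace_zero[OF M])
  note at = dilation_blocks_commute_at[of M a0 a1 a2 b0 b1 b2 D T S, OF M a b D(1) TS(1)]
  show ?thesis
  proof
    assume comm: ?commute
    have ?symbols
      using comm at[of _ 0] by (simp add: TS column0 toeplitz0 zero flip: toeplitz_3_commute_iff[OF M a b])
    moreover have ?column
    proof
      fix h
      have "dilation_block D T a0 a1 a2 (dilation_block D S b0 b1 b2 (h, \<lambda>_. 0))
          = dilation_block D S b0 b1 b2 (dilation_block D T a0 a1 a2 (h, \<lambda>_. 0))"
        using comm 0 by blast
      thus "a1 (b2 (D (P h))) = b1 (a2 (D (P h)))"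
        using at[OF 0] dilation_column_commute_iff[OF M a b D(1) \<open>?symbols\<close> DT DS] by (simp add: toeplitz0 zero)
    qed
    ultimately show "?symbols \<and> ?column" ..
  next
    assume "?symbols \<and> ?column"
    thus ?commute
      using at dilation_column_commute_iff[OF M a b D(1) _ DT DS] toeplitz_3_commute_iff[OF M a b] by auto
  qed
qed

section \<open>The commutation conditions\<close>

text \<open>The coefficients of \<open>z\<^sup>3\<close> and \<open>z\<^sup>4\<close> in \<open>\<phi>\<^sub>1 \<phi>\<^sub>2 = \<phi>\<^sub>2 \<phi>\<^sub>1\<close> are the adjoints of those of \<open>z\<close> and
  \<open>1\<close>; the remaining three coefficients are conditions (ii)--(iv).\<close>

lemma fundamental_symbols_commute_iff:
  assumes M: "csubspace M" "cclosed M" and F1: "bop M F1" and F2: "bop M F2" and Xi: "bop M Xi"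
  shows "poly_symbols_commute M F1 Xi (adj M F2) F2 (adj M Xi) (adj M F1)
    \<longleftrightarrow> (\<forall>x\<in>M. (F2 (adj M F2 x) - adj M F2 (F2 x)) - (F1 (adj M F1 x) - adj M F1 (F1 x))
                  = Xi (adj M Xi x) - adj M Xi (Xi x))
      \<and> (\<forall>x\<in>M. F1 (F2 x) - F2 (F1 x) = 0)
      \<and> (\<forall>x\<in>M. Xi (F2 x) - F2 (Xi x) = adj M Xi (F1 x) - F1 (adj M Xi x))"
    (is "_ \<longleftrightarrow> ?ii \<and> ?iii \<and> ?iv")
proof -
  note adj = adj_bop[OF M F1] adj_bop[OF M F2] adj_bop[OF M Xi]
  have e4: "adj M F2 (adj M F1 x) = adj M F1 (adj M F2 x)" if ?iii "x \<in> M" for x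
    using adj_product_identity[OF M F1 F2 bop_id bop_id F2 F1 bop_id bop_id _ \<open>x \<in> M\<close>] that(1) by simp
  have e3: "Xi (adj M F1 x) + adj M F2 (adj M Xi x) = adj M Xi (adj M F2 x) + adj M F1 (Xi x)"
    if ?iv "x \<in> M" for x
  proof -
    have "F1 (adj M Xi y) + Xi (F2 y) = F2 (Xi y) + adj M Xi (F1 y)" if "y \<in> M" for y
      using \<open>?iv\<close> that by (simp add: algebra_simps)
    from adj_product_identity[OF M F1 adj(3) Xi F2 F2 Xi adj(3) F1 this \<open>x \<in> M\<close>]
    show ?thesis using adj_adj[OF M Xi] \<open>x \<in> M\<close> bopD_in[OF adj(1)] by simp
  qed
  show ?thesis unfolding poly_symbols_commute_def
    using e3 e4 by (auto simp: algebra_simps)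
qed

lemma poly_symbols_commute_shift2:
  assumes M: "csubspace M" and a: "bop M a0" "bop M a1" "bop M a2"
  shows "poly_symbols_commute M a0 a1 a2 (\<lambda>_. 0) (\<lambda>_. 0) id"
  using a M by (simp add: poly_symbols_commute_def bop_zero)

lemma dilation_block_commute_shift2_iff:
  assumes M: "csubspace M" and a: "bop M a0" "bop M a1" "bop M a2" and D: "\<And>h. D h \<in> M" "D 0 = 0"
    and TP: "\<And>h. T (P h) = P (T h)" "T 0 = 0" "P 0 = 0"
    and DT: "\<And>h. D (T h) = a0 (D h) + a2 (D (P h))"
  shows "(\<forall>k\<in>{(h, f). f \<in> ell2 M}.
            dilation_block D T a0 a1 a2 (dilation_block D P (\<lambda>_. 0) (\<lambda>_. 0) id k)
          = dilation_block D P (\<lambda>_. 0) (\<lambda>_. 0) id (dilation_block D T a0 a1 a2 k))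
     \<longleftrightarrow> (\<forall>h. a1 (D (P h)) = 0)"
  using dilation_blocks_commute_iff[of M a0 a1 a2 "\<lambda>_. 0" "\<lambda>_. 0" id D T P P,
      OF M a bop_zero_op[OF M] bop_zero_op[OF M] bop_id D TP DT]
    poly_symbols_commute_shift2[OF M a] by simp

theorem lemma4p3:
  fixes A B P F1 F2 Xi :: "'h::chilbert \<Rightarrow> 'h"
  defines "D \<equiv> defect P"
    and "DP \<equiv> defect_space P"
    and "K \<equiv> {(h, f). f \<in> ell2 (defect_space P)} :: ('h \<times> (nat \<Rightarrow> 'h)) set"
  defines "V1 \<equiv> \<lambda>(h, f). (A h, \<lambda>n. (if n = 0 then Xi (D h)
                                    else if n = 1 then adj DP F2 (D h) else 0)
                               + toeplitz [F1, Xi, adj DP F2] f n)"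
    and "V2 \<equiv> \<lambda>(h, f). (B h, \<lambda>n. (if n = 0 then adj DP Xi (D h)
                                    else if n = 1 then adj DP F1 (D h) else 0)
                               + toeplitz [F2, adj DP Xi, adj DP F1] f n)"
    and "V3 \<equiv> \<lambda>(h, f). (P h, \<lambda>n. (if n = 1 then D h else 0)
                               + toeplitz [\<lambda>_. 0, \<lambda>_. 0, id] f n)"
  assumes tc: "tetrablock_contraction A B P"
    and F1: "bop DP F1" and F2: "bop DP F2" and Xi: "bop DP Xi"
    and fund1: "\<forall>h. A h - adj UNIV B (P h) = D (F1 (D h))"
    and fund2: "\<forall>h. B h - adj UNIV A (P h) = D (F2 (D h))"
  shows "((\<forall>k\<in>K. V1 (V2 k) = V2 (V1 k)) \<and> (\<forall>k\<in>K. V1 (V3 k) = V3 (V1 k))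
           \<and> (\<forall>k\<in>K. V2 (V3 k) = V3 (V2 k)))
     \<longleftrightarrow>
         ((\<forall>h. Xi (adj DP F1 (D (P h))) - adj DP Xi (adj DP F2 (D (P h))) = 0)
        \<and> (\<forall>x\<in>DP. (F2 (adj DP F2 x) - adj DP F2 (F2 x)) - (F1 (adj DP F1 x) - adj DP F1 (F1 x))
                  = Xi (adj DP Xi x) - adj DP Xi (Xi x))
        \<and> (\<forall>x\<in>DP. F1 (F2 x) - F2 (F1 x) = 0)
        \<and> (\<forall>x\<in>DP. Xi (F2 x) - F2 (Xi x) = adj DP Xi (F1 x) - F1 (adj DP Xi x))
        \<and> (\<forall>h. Xi (D (P h)) = 0) \<and> (\<forall>h. adj DP Xi (D (P h)) = 0))"
proof -
  have A: "bop UNIV A" and B: "bop UNIV B" and P: "bop UNIV P"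
    and AB: "\<And>x. A (B x) = B (A x)" and AP: "\<And>x. A (P x) = P (A x)" and BP: "\<And>x. B (P x) = P (B x)"
    using tc unfolding tetrablock_contraction_def by auto
  note contr = tetrablock_contraction_contractive[OF tc]
  note D = defect_space_props[OF P contr, folded D_def DP_def]
  note zero = bop_zero[OF D(1) csubspace_UNIV] bop_zero[OF A csubspace_UNIV] bop_zero[OF B csubspace_UNIV]
    bop_zero[OF P csubspace_UNIV]
  note adj = adj_bop[OF D(3,4) F1] adj_bop[OF D(3,4) F2] adj_bop[OF D(3,4) Xi]
  have DA: "D (A h) = F1 (D h) + adj DP F2 (D (P h))" and DB: "D (B h) = F2 (D h) + adj DP F1 (D (P h))" for h
    using defect_intertwining[OF P contr A B AP, of F1 F2] defect_intertwining[OF P contr B A BP, of F2 F1]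
      F1 F2 fund1 fund2 unfolding D_def DP_def by blast+
  have V: "V1 = dilation_block D A F1 Xi (adj DP F2)" "V2 = dilation_block D B F2 (adj DP Xi) (adj DP F1)"
    "V3 = dilation_block D P (\<lambda>_. 0) (\<lambda>_. 0) id"
    unfolding V1_def V2_def V3_def dilation_block_def dilation_column_def by (auto simp: fun_eq_iff)
  have K: "K = {(h, f). f \<in> ell2 DP}" unfolding K_def DP_def ..
  have "(\<forall>k\<in>K. V1 (V2 k) = V2 (V1 k))
      \<longleftrightarrow> poly_symbols_commute DP F1 Xi (adj DP F2) F2 (adj DP Xi) (adj DP F1)
        \<and> (\<forall>h. Xi (adj DP F1 (D (P h))) = adj DP Xi (adj DP F2 (D (P h))))"
    unfolding V K
    by (rule dilation_blocks_commute_iff[of DP F1 Xi "adj DP F2" F2 "adj DP Xi" "adj DP F1" D A B P,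
          OF D(3) F1 Xi adj(2) F2 adj(3) adj(1) D(5) zero(1) AB zero(2,3) DA DB])
  moreover have "(\<forall>k\<in>K. V1 (V3 k) = V3 (V1 k)) \<longleftrightarrow> (\<forall>h. Xi (D (P h)) = 0)"
    unfolding V K by (rule dilation_block_commute_shift2_iff[OF D(3) F1 Xi adj(2) D(5) zero(1) AP zero(2,4) DA])
  moreover have "(\<forall>k\<in>K. V2 (V3 k) = V3 (V2 k)) \<longleftrightarrow> (\<forall>h. adj DP Xi (D (P h)) = 0)"
    unfolding V K by (rule dilation_block_commute_shift2_iff[OF D(3) F2 adj(3) adj(1) D(5) zero(1) BP zero(3,4) DB])
  ultimately show ?thesis using fundamental_symbols_commute_iff[OF D(3,4) F1 F2 Xi] by auto
qed

end
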